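(* Let $\mathcal{X}$ be an extension-closed subcategory of $\mathcal{C}$ and $\mathcal{W}$ an $\mathcal{X}$-injective cogenerator for $\mathcal{X}$. Then for every $C\in\widehat{\mathcal{X}}$, $$\mathrm{pd}_{\widehat{\mathcal{W}}}(C)=\mathrm{pd}_{\mathcal{W}}(C)=\mathrm{resdim}_{\mathcal{X}}(C).$$
   Context: $\mathcal{C}=(\mathcal{C},\mathbb{E},\mathfrak{s})$ is an extriangulated category (in the sense of Nakaoka–Palu) with enough projectives and enough injectives; a conflation realizing $\delta\in\mathbb{E}(C,A)$ is written as an $\mathbb{E}$-triangle $A\to B\to C\dashrightarrow$. All subcategories are full, additive, closed under isomorphisms and direct summands. Higher extensions: $\mathbb{E}^1=\mathbb{E}$, $\mathbb{E}^{i+1}(X,Y)=\mathbb{E}(X,\Sigma^iY)\cong\mathbb{E}(\Omega^iX,Y)$. $\mathcal{X}$ is extension-closed if for every $\mathbb{E}$-triangle $A\to B\to C\dashrightarrow$ with $A,C\in\mathcal{X}$ one has $B\in\mathcal{X}$. $\mathcal{W}$ is an $\mathcal{X}$-injective cogenerator for $\mathcal{X}$ if $\mathcal{W}\subseteq\mathcal{X}$, for each $X\in\mathcal{X}$ there is an $\mathbb{E}$-triangle $X\to W\to X'\dashrightarrow$ with $W\in\mathcal{W}$, $X'\in\mathcal{X}$, and $\mathbb{E}^i(X,W)=0$ for all $X\in\mathcal{X}$, $W\in\mathcal{W}$, $i\ge1$. For a subcategory $\mathcal{Z}$ and $n\ge0$, $\widehat{\mathcal{Z}}_n$ is the subcategory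 of objects $C$ for which there exist $\mathbb{E}$-triangles $K_{i+1}\to Z_i\to K_i\dashrightarrow$ ($0\le i\le n-1$) with $K_0=C$, all $Z_i\in\mathcal{Z}$ and $K_n\in\mathcal{Z}$; $\widehat{\mathcal{Z}}=\bigcup_n\widehat{\mathcal{Z}}_n$; $\mathrm{resdim}_{\mathcal{Z}}(C)=\min\{n:C\in\widehat{\mathcal{Z}}_n\}$. $\mathrm{pd}_{\mathcal{Z}}(C)=\min\{n\in\mathbb{N}:\mathbb{E}^i(C,Z)=0\ \forall Z\in\mathcal{Z},\forall i>n\}$. *)

theory Defs
  imports Main "HOL-Library.Extended_Nat"
begin

section \<open>Extriangulated categories (Nakaoka--Palu), encoded concretely\<close>

text \<open>Data of a (pre)additive category C together with a bifunctor E and a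
 realization s.  Morphisms carry their domain and codomain.
  cmp g f     = g o f  (defined when cd f = dm g)
  mzero A B   = the zero morphism A -> B
  Ex C A      = E(C,A), with group operation eadd C A and zero ezero C A
  pull c A d  = c^* d  (c : C' -> C, d in E(C,A), result in E(C',A))
  push a C d  = a_* d  (a : A -> A', d in E(C,A), result in E(C,A'))
  rlz C A d x y  means that the sequence A -x-> B -y-> C belongs to the
                 equivalence class s(d), for d in E(C,A).\<close>

record ('o,'m,'e) ecat =
  Ob :: "'o set"
  Mor :: "'m set"
  dm :: "'m \<Rightarrow> 'o"
  cd :: "'m \<Rightarrow> 'o"
  cmp :: "'m \<Rightarrow> 'm \<Rightarrow> 'm"
  idm :: "'o \<Rightarrow> 'm"
  madd :: "'m \<Rightarrow> 'm \<Rightarrow> 'm"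
  mzero :: "'o \<Rightarrow> 'o \<Rightarrow> 'm"
  Ex :: "'o \<Rightarrow> 'o \<Rightarrow> 'e set"
  eadd :: "'o \<Rightarrow> 'o \<Rightarrow> 'e \<Rightarrow> 'e \<Rightarrow> 'e"
  ezero :: "'o \<Rightarrow> 'o \<Rightarrow> 'e"
  pull :: "'m \<Rightarrow> 'o \<Rightarrow> 'e \<Rightarrow> 'e"
  push :: "'m \<Rightarrow> 'o \<Rightarrow> 'e \<Rightarrow> 'e"
  rlz :: "'o \<Rightarrow> 'o \<Rightarrow> 'e \<Rightarrow> 'm \<Rightarrow> 'm \<Rightarrow> bool"

definition abgrp :: "'a set \<Rightarrow> ('a \<Rightarrow> 'a \<Rightarrow> 'a) \<Rightarrow> 'a \<Rightarrow> bool" where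
  "abgrp S p z \<longleftrightarrow> z \<in> S \<and> (\<forall>x\<in>S. \<forall>y\<in>S. p x y \<in> S)
     \<and> (\<forall>x\<in>S. \<forall>y\<in>S. \<forall>w\<in>S. p (p x y) w = p x (p y w))
     \<and> (\<forall>x\<in>S. \<forall>y\<in>S. p x y = p y x) \<and> (\<forall>x\<in>S. p z x = x)
     \<and> (\<forall>x\<in>S. \<exists>y\<in>S. p x y = z)"

definition Hom :: "('o,'m,'e,'z) ecat_scheme \<Rightarrow> 'o \<Rightarrow> 'o \<Rightarrow> 'm set" where
  "Hom K A B = {f \<in> Mor K. dm K f = A \<and> cd K f = B}"

definition cat_ax :: "('o,'m,'e,'z) ecat_scheme \<Rightarrow> bool" where
  "cat_ax K \<longleftrightarrow>
    (\<forall>f\<in>Mor K. dm K f \<in> Ob K \<and> cd K f \<in> Ob K)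
  \<and> (\<forall>A\<in>Ob K. idm K A \<in> Hom K A A)
  \<and> (\<forall>f\<in>Mor K. \<forall>g\<in>Mor K. cd K f = dm K g \<longrightarrow> cmp K g f \<in> Hom K (dm K f) (cd K g))
  \<and> (\<forall>f\<in>Mor K. \<forall>g\<in>Mor K. \<forall>h\<in>Mor K. cd K f = dm K g \<and> cd K g = dm K h \<longrightarrow>
        cmp K h (cmp K g f) = cmp K (cmp K h g) f)
  \<and> (\<forall>f\<in>Mor K. cmp K (idm K (cd K f)) f = f \<and> cmp K f (idm K (dm K f)) = f)"

definition iso :: "('o,'m,'e,'z) ecat_scheme \<Rightarrow> 'm \<Rightarrow> bool" where
  "iso K f \<longleftrightarrow> f \<in> Mor K \<and> (\<exists>g \<in> Hom K (cd K f) (dm K f).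
      cmp K g f = idm K (dm K f) \<and> cmp K f g = idm K (cd K f))"

definition zero_obj :: "('o,'m,'e,'z) ecat_scheme \<Rightarrow> 'o \<Rightarrow> bool" where
  "zero_obj K Z \<longleftrightarrow> Z \<in> Ob K \<and>
     (\<forall>X\<in>Ob K. Hom K Z X = {mzero K Z X} \<and> Hom K X Z = {mzero K X Z})"

definition biprod :: "('o,'m,'e,'z) ecat_scheme \<Rightarrow> 'o \<Rightarrow> 'o \<Rightarrow> 'o \<Rightarrow> 'm \<Rightarrow> 'm \<Rightarrow> 'm \<Rightarrow> 'm \<Rightarrow> bool" where
  "biprod K A B S i1 i2 p1 p2 \<longleftrightarrow> S \<in> Ob K \<and>
     i1 \<in> Hom K A S \<and> i2 \<in> Hom K B S \<and> p1 \<in> Hom K S A \<and> p2 \<in> Hom K S B \<and>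
     cmp K p1 i1 = idm K A \<and> cmp K p2 i2 = idm K B \<and>
     cmp K p2 i1 = mzero K A B \<and> cmp K p1 i2 = mzero K B A \<and>
     madd K (cmp K i1 p1) (cmp K i2 p2) = idm K S"

definition additive_cat :: "('o,'m,'e,'z) ecat_scheme \<Rightarrow> bool" where
  "additive_cat K \<longleftrightarrow> cat_ax K
  \<and> (\<forall>A\<in>Ob K. \<forall>B\<in>Ob K. abgrp (Hom K A B) (madd K) (mzero K A B))
  \<and> (\<forall>A\<in>Ob K. \<forall>B\<in>Ob K. \<forall>C\<in>Ob K. \<forall>f\<in>Hom K A B. \<forall>f'\<in>Hom K A B. \<forall>g\<in>Hom K B C.
        cmp K g (madd K f f') = madd K (cmp K g f) (cmp K g f'))
  \<and> (\<forall>A\<in>Ob K. \<forall>B\<in>Ob K. \<forall>C\<in>Ob K. \<forall>f\<in>Hom K A B. \<forall>g\<in>Hom K B C. \<forall>g'\<in>Hom K B C.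
        cmp K (madd K g g') f = madd K (cmp K g f) (cmp K g' f))
  \<and> (\<exists>Z. zero_obj K Z)
  \<and> (\<forall>A\<in>Ob K. \<forall>B\<in>Ob K. \<exists>S i1 i2 p1 p2. biprod K A B S i1 i2 p1 p2)"

definition ET1 :: "('o,'m,'e,'z) ecat_scheme \<Rightarrow> bool" where
  "ET1 K \<longleftrightarrow>
    (\<forall>C\<in>Ob K. \<forall>A\<in>Ob K. abgrp (Ex K C A) (eadd K C A) (ezero K C A))
  \<and> (\<forall>c\<in>Mor K. \<forall>A\<in>Ob K. \<forall>d\<in>Ex K (cd K c) A. pull K c A d \<in> Ex K (dm K c) A)
  \<and> (\<forall>a\<in>Mor K. \<forall>C\<in>Ob K. \<forall>d\<in>Ex K C (dm K a). push K a C d \<in> Ex K C (cd K a))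
  \<and> (\<forall>c\<in>Mor K. \<forall>A\<in>Ob K. \<forall>d\<in>Ex K (cd K c) A. \<forall>d'\<in>Ex K (cd K c) A.
        pull K c A (eadd K (cd K c) A d d') = eadd K (dm K c) A (pull K c A d) (pull K c A d'))
  \<and> (\<forall>a\<in>Mor K. \<forall>C\<in>Ob K. \<forall>d\<in>Ex K C (dm K a). \<forall>d'\<in>Ex K C (dm K a).
        push K a C (eadd K C (dm K a) d d') = eadd K C (cd K a) (push K a C d) (push K a C d'))
  \<and> (\<forall>C\<in>Ob K. \<forall>A\<in>Ob K. \<forall>d\<in>Ex K C A. pull K (idm K C) A d = d \<and> push K (idm K A) C d = d)
  \<and> (\<forall>c\<in>Mor K. \<forall>c'\<in>Mor K. \<forall>A\<in>Ob K. cd K c' = dm K c \<longrightarrow>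
        (\<forall>d\<in>Ex K (cd K c) A. pull K (cmp K c c') A d = pull K c' A (pull K c A d)))
  \<and> (\<forall>a\<in>Mor K. \<forall>a'\<in>Mor K. \<forall>C\<in>Ob K. cd K a = dm K a' \<longrightarrow>
        (\<forall>d\<in>Ex K C (dm K a). push K (cmp K a' a) C d = push K a' C (push K a C d)))
  \<and> (\<forall>a\<in>Mor K. \<forall>c\<in>Mor K. \<forall>d\<in>Ex K (cd K c) (dm K a).
        push K a (dm K c) (pull K c (dm K a) d) = pull K c (cd K a) (push K a (cd K c) d))
  \<and> (\<forall>c\<in>Mor K. \<forall>c'\<in>Mor K. \<forall>A\<in>Ob K. dm K c = dm K c' \<and> cd K c = cd K c' \<longrightarrow>
        (\<forall>d\<in>Ex K (cd K c) A. pull K (madd K c c') A d = eadd K (dm K c) A (pull K c A d) (pull K c' A d)))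
  \<and> (\<forall>a\<in>Mor K. \<forall>a'\<in>Mor K. \<forall>C\<in>Ob K. dm K a = dm K a' \<and> cd K a = cd K a' \<longrightarrow>
        (\<forall>d\<in>Ex K C (dm K a). push K (madd K a a') C d = eadd K C (cd K a) (push K a C d) (push K a' C d)))"

definition seq_eq :: "('o,'m,'e,'z) ecat_scheme \<Rightarrow> 'm \<Rightarrow> 'm \<Rightarrow> 'm \<Rightarrow> 'm \<Rightarrow> bool" where
  "seq_eq K x y x' y' \<longleftrightarrow> x \<in> Mor K \<and> y \<in> Mor K \<and> x' \<in> Mor K \<and> y' \<in> Mor K \<and>
     dm K x = dm K x' \<and> cd K y = cd K y' \<and> cd K x = dm K y \<and> cd K x' = dm K y' \<and>
     (\<exists>b\<in>Hom K (cd K x) (cd K x'). iso K b \<and> cmp K b x = x' \<and> cmp K y' b = y)"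

definition realization :: "('o,'m,'e,'z) ecat_scheme \<Rightarrow> bool" where
  "realization K \<longleftrightarrow>
    (\<forall>C\<in>Ob K. \<forall>A\<in>Ob K. \<forall>d\<in>Ex K C A. \<exists>x y. rlz K C A d x y)
  \<and> (\<forall>C A d x y. rlz K C A d x y \<longrightarrow> C \<in> Ob K \<and> A \<in> Ob K \<and> d \<in> Ex K C A \<and>
        x \<in> Mor K \<and> y \<in> Mor K \<and> dm K x = A \<and> cd K x = dm K y \<and> cd K y = C)
  \<and> (\<forall>C A d x y x' y'. rlz K C A d x y \<and> rlz K C A d x' y' \<longrightarrow> seq_eq K x y x' y')
  \<and> (\<forall>C A d x y x' y'. rlz K C A d x y \<and> seq_eq K x y x' y' \<longrightarrow> rlz K C A d x' y')
  \<and> (\<forall>C A d x y C' A' d' x' y' a c.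
        rlz K C A d x y \<and> rlz K C' A' d' x' y' \<and> a \<in> Hom K A A' \<and> c \<in> Hom K C C' \<and>
        push K a C d = pull K c A' d' \<longrightarrow>
        (\<exists>b\<in>Hom K (cd K x) (cd K x'). cmp K b x = cmp K x' a \<and> cmp K c y = cmp K y' b))"

text \<open>(ET2), part 2: s is additive: s(0) is the split sequence and
  s(d (+) d') = s(d) (+) s(d').\<close>
definition additive_realization :: "('o,'m,'e,'z) ecat_scheme \<Rightarrow> bool" where
  "additive_realization K \<longleftrightarrow>
    (\<forall>A C S i1 i2 p1 p2. A \<in> Ob K \<and> C \<in> Ob K \<and> biprod K A C S i1 i2 p1 p2 \<longrightarrow>
        rlz K C A (ezero K C A) i1 p2)
  \<and> (\<forall>A A' B B' C C' SA SB SC iA iA' pA pA' iB iB' pB pB' iC iC' pC pC' d d' x y x' y'.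
        biprod K A A' SA iA iA' pA pA' \<and> biprod K B B' SB iB iB' pB pB' \<and>
        biprod K C C' SC iC iC' pC pC' \<and>
        rlz K C A d x y \<and> rlz K C' A' d' x' y' \<and> cd K x = B \<and> cd K x' = B' \<longrightarrow>
        rlz K SC SA
          (eadd K SC SA (push K iA SC (pull K pC A d)) (push K iA' SC (pull K pC' A' d')))
          (madd K (cmp K iB (cmp K x pA)) (cmp K iB' (cmp K x' pA')))
          (madd K (cmp K iC (cmp K y pB)) (cmp K iC' (cmp K y' pB'))))"

definition ET3 :: "('o,'m,'e,'z) ecat_scheme \<Rightarrow> bool" where
  "ET3 K \<longleftrightarrow> (\<forall>C A d x y C' A' d' x' y' a b.
     rlz K C A d x y \<and> rlz K C' A' d' x' y' \<and> a \<in> Hom K A A' \<and>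
     b \<in> Hom K (cd K x) (cd K x') \<and> cmp K x' a = cmp K b x \<longrightarrow>
     (\<exists>c\<in>Hom K C C'. cmp K c y = cmp K y' b \<and> push K a C d = pull K c A' d'))"

definition ET3op :: "('o,'m,'e,'z) ecat_scheme \<Rightarrow> bool" where
  "ET3op K \<longleftrightarrow> (\<forall>C A d x y C' A' d' x' y' b c.
     rlz K C A d x y \<and> rlz K C' A' d' x' y' \<and> c \<in> Hom K C C' \<and>
     b \<in> Hom K (cd K x) (cd K x') \<and> cmp K c y = cmp K y' b \<longrightarrow>
     (\<exists>a\<in>Hom K A A'. cmp K x' a = cmp K b x \<and> push K a C d = pull K c A' d'))"

definition ET4 :: "('o,'m,'e,'z) ecat_scheme \<Rightarrow> bool" where
  "ET4 K \<longleftrightarrow> (\<forall>A B C D F d d' f f' g g'.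
     rlz K D A d f f' \<and> rlz K F B d' g g' \<and> cd K f = B \<and> cd K g = C \<longrightarrow>
     (\<exists>E h h' e1 e2 d''. E \<in> Ob K \<and> h \<in> Hom K A C \<and> h' \<in> Hom K C E \<and>
        e1 \<in> Hom K D E \<and> e2 \<in> Hom K E F \<and>
        h = cmp K g f \<and> cmp K h' g = cmp K e1 f' \<and> cmp K e2 h' = g' \<and>
        rlz K E A d'' h h' \<and>
        rlz K F D (push K f' F d') e1 e2 \<and>
        pull K e1 A d'' = d \<and>
        push K f E d'' = pull K e2 B d'))"

definition ET4op :: "('o,'m,'e,'z) ecat_scheme \<Rightarrow> bool" where
  "ET4op K \<longleftrightarrow> (\<forall>A B C D F d d' f f' g g'.
     rlz K A D d f' f \<and> rlz K B F d' g' g \<and> cd K f' = B \<and> cd K g' = C \<longrightarrow>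
     (\<exists>E h h' e1 e2 d''. E \<in> Ob K \<and> h \<in> Hom K C A \<and> h' \<in> Hom K E C \<and>
        e1 \<in> Hom K E D \<and> e2 \<in> Hom K F E \<and>
        h = cmp K f g \<and> cmp K g h' = cmp K f' e1 \<and> cmp K h' e2 = g' \<and>
        rlz K A E d'' h' h \<and>
        rlz K D F (pull K f' F d') e2 e1 \<and>
        push K e1 A d'' = d \<and>
        pull K f E d'' = push K e2 B d'))"

definition extriangulated :: "('o,'m,'e,'z) ecat_scheme \<Rightarrow> bool" where
  "extriangulated K \<longleftrightarrow> additive_cat K \<and> ET1 K \<and> realization K \<and>
     additive_realization K \<and> ET3 K \<and> ET3op K \<and> ET4 K \<and> ET4op K"

section \<open>Projectives, injectives, higher extensions\<close>

definition projective :: "('o,'m,'e,'z) ecat_scheme \<Rightarrow> 'o \<Rightarrow> bool" where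
  "projective K P \<longleftrightarrow> P \<in> Ob K \<and> (\<forall>X\<in>Ob K. Ex K P X = {ezero K P X})"

definition injective :: "('o,'m,'e,'z) ecat_scheme \<Rightarrow> 'o \<Rightarrow> bool" where
  "injective K I \<longleftrightarrow> I \<in> Ob K \<and> (\<forall>X\<in>Ob K. Ex K X I = {ezero K X I})"

definition enough_projectives :: "('o,'m,'e,'z) ecat_scheme \<Rightarrow> bool" where
  "enough_projectives K \<longleftrightarrow> (\<forall>C\<in>Ob K. \<exists>A d x y. rlz K C A d x y \<and> projective K (cd K x))"

definition enough_injectives :: "('o,'m,'e,'z) ecat_scheme \<Rightarrow> bool" where
  "enough_injectives K \<longleftrightarrow> (\<forall>A\<in>Ob K. \<exists>C d x y. rlz K C A d x y \<and> injective K (cd K x))"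

text \<open>Ks 0 = X, and E-triangles Ks (k+1) -> P_k -> Ks k with P_k projective for k < n,
  so that Ks n is an n-th syzygy Omega^n X.\<close>
definition syz_chain :: "('o,'m,'e,'z) ecat_scheme \<Rightarrow> nat \<Rightarrow> (nat \<Rightarrow> 'o) \<Rightarrow> bool" where
  "syz_chain K n Ks \<longleftrightarrow> (\<forall>k<n. \<exists>d x y. rlz K (Ks k) (Ks (Suc k)) d x y \<and> projective K (cd K x))"

text \<open>Vanishing of E^i(X,Y) = E(Omega^(i-1) X, Y) for i >= 1.  (Independent of the
  choice of syzygies.)\<close>
definition ext_vanish :: "('o,'m,'e,'z) ecat_scheme \<Rightarrow> nat \<Rightarrow> 'o \<Rightarrow> 'o \<Rightarrow> bool" where
  "ext_vanish K i X Y \<longleftrightarrow> (\<exists>Ks. Ks 0 = X \<and> syz_chain K (i - 1) Ks \<and>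
      Ex K (Ks (i - 1)) Y = {ezero K (Ks (i - 1)) Y})"

section \<open>Subcategories, resolutions, dimensions\<close>

definition subcat :: "('o,'m,'e,'z) ecat_scheme \<Rightarrow> 'o set \<Rightarrow> bool" where
  "subcat K Z \<longleftrightarrow> Z \<subseteq> Ob K \<and> (\<exists>Z0\<in>Z. zero_obj K Z0)
   \<and> (\<forall>A B S i1 i2 p1 p2. A \<in> Z \<and> B \<in> Z \<and> biprod K A B S i1 i2 p1 p2 \<longrightarrow> S \<in> Z)
   \<and> (\<forall>f. iso K f \<and> dm K f \<in> Z \<longrightarrow> cd K f \<in> Z)
   \<and> (\<forall>A B S i1 i2 p1 p2. A \<in> Ob K \<and> B \<in> Ob K \<and> biprod K A B S i1 i2 p1 p2 \<and> S \<in> Z \<longrightarrow> A \<in> Z \<and> B \<in> Z)"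

definition extension_closed :: "('o,'m,'e,'z) ecat_scheme \<Rightarrow> 'o set \<Rightarrow> bool" where
  "extension_closed K X \<longleftrightarrow> (\<forall>C A d x y. rlz K C A d x y \<and> A \<in> X \<and> C \<in> X \<longrightarrow> cd K x \<in> X)"

definition inj_cogenerator :: "('o,'m,'e,'z) ecat_scheme \<Rightarrow> 'o set \<Rightarrow> 'o set \<Rightarrow> bool" where
  "inj_cogenerator K X W \<longleftrightarrow> W \<subseteq> X
   \<and> (\<forall>A\<in>X. \<exists>A' d x y. rlz K A' A d x y \<and> cd K x \<in> W \<and> A' \<in> X)
   \<and> (\<forall>A\<in>X. \<forall>V\<in>W. \<forall>i\<ge>1. ext_vanish K i A V)"

definition in_hat :: "('o,'m,'e,'z) ecat_scheme \<Rightarrow> 'o set \<Rightarrow> nat \<Rightarrow> 'o \<Rightarrow> bool" where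
  "in_hat K Z n C \<longleftrightarrow> (\<exists>Ks. Ks 0 = C \<and> Ks n \<in> Z \<and>
     (\<forall>i<n. \<exists>d x y. rlz K (Ks i) (Ks (Suc i)) d x y \<and> cd K x \<in> Z))"

definition hat :: "('o,'m,'e,'z) ecat_scheme \<Rightarrow> 'o set \<Rightarrow> 'o set" where
  "hat K Z = {C. \<exists>n. in_hat K Z n C}"

definition resdim :: "('o,'m,'e,'z) ecat_scheme \<Rightarrow> 'o set \<Rightarrow> 'o \<Rightarrow> enat" where
  "resdim K Z C = (if \<exists>n. in_hat K Z n C then enat (LEAST n. in_hat K Z n C) else \<infinity>)"

definition pd :: "('o,'m,'e,'z) ecat_scheme \<Rightarrow> 'o set \<Rightarrow> 'o \<Rightarrow> enat" where
  "pd K Z C = (if \<exists>n. \<forall>V\<in>Z. \<forall>i>n. ext_vanish K i C V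
     then enat (LEAST n. \<forall>V\<in>Z. \<forall>i>n. ext_vanish K i C V) else \<infinity>)"

end

theory Submission
  imports Defs
begin

text \<open>
  Vanishing of E^i(C, V) is equivalent to E(Omega^(i-1) C, V) = 0 and to
  E(C, Sigma^(i-1) V) = 0, by dimension shifting along syzygy and cosyzygy triangles.
  If C has an X-resolution of length n, shifting along it, using E^i(X, W) = 0, kills
  E^i(C, -) on W for i > n, and a second shift along W-resolutions extends this to
  hat W. Conversely, if E^i(C, W) = 0 for all i > m with m < n, shifting down the
  resolution K_n -> X_(n-1) -> K_(n-1) -> ... gives E(K_(n-1), W) = 0. Such a K_(n-1)
  lies in X: it is a direct summand of the cone of K_n -> W_0 (+) X_(n-1), where
  K_n -> W_0 is the cogenerator of K_n, and that cone is an extension of objects of X.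
  So the resolution shortens, and all three dimensions equal the minimal length n.
\<close>

lemma abgrp_closed: "abgrp S p z \<Longrightarrow> x \<in> S \<Longrightarrow> y \<in> S \<Longrightarrow> p x y \<in> S"
  unfolding abgrp_def by blast

lemma abgrp_zero: "abgrp S p z \<Longrightarrow> z \<in> S"
  unfolding abgrp_def by blast

lemma abgrp_assoc: "abgrp S p z \<Longrightarrow> x \<in> S \<Longrightarrow> y \<in> S \<Longrightarrow> w \<in> S \<Longrightarrow> p (p x y) w = p x (p y w)"
  unfolding abgrp_def by blast

lemma abgrp_comm: "abgrp S p z \<Longrightarrow> x \<in> S \<Longrightarrow> y \<in> S \<Longrightarrow> p x y = p y x"
  unfolding abgrp_def by blast

lemma abgrp_left_zero: "abgrp S p z \<Longrightarrow> x \<in> S \<Longrightarrow> p z x = x"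
  unfolding abgrp_def by blast

lemma abgrp_right_zero: "abgrp S p z \<Longrightarrow> x \<in> S \<Longrightarrow> p x z = x"
  unfolding abgrp_def by metis

lemma abgrp_inverse: "abgrp S p z \<Longrightarrow> x \<in> S \<Longrightarrow> \<exists>y\<in>S. p x y = z"
  unfolding abgrp_def by blast

lemma abgrp_add_left_eq_self:
  assumes G: "abgrp S p z" and x: "x \<in> S" and y: "y \<in> S" and xy: "p x y = x"
  shows "y = z"
proof -
  obtain u where u: "u \<in> S" "p u x = z"
    using abgrp_inverse[OF G x] abgrp_comm[OF G x] by metis
  have "z = p (p u x) y" using xy abgrp_assoc[OF G u(1) x y] u(2) by simp
  then show ?thesis using u(2) abgrp_left_zero[OF G y] by simp
qed

lemma abgrp_self_add_eq_self: "abgrp S p z \<Longrightarrow> x \<in> S \<Longrightarrow> p x x = x \<Longrightarrow> x = z"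
  using abgrp_add_left_eq_self by metis

definition abgrp_neg :: "'a set \<Rightarrow> ('a \<Rightarrow> 'a \<Rightarrow> 'a) \<Rightarrow> 'a \<Rightarrow> 'a \<Rightarrow> 'a" where
  "abgrp_neg S p z x = (SOME y. y \<in> S \<and> p x y = z)"

lemma abgrp_neg: "abgrp S p z \<Longrightarrow> x \<in> S \<Longrightarrow> abgrp_neg S p z x \<in> S \<and> p x (abgrp_neg S p z x) = z"
  unfolding abgrp_neg_def by (rule someI_ex) (metis abgrp_inverse)

section \<open>Vanishing of E, syzygies and cosyzygies\<close>

definition Ex_trivial :: "('o,'m,'e,'z) ecat_scheme \<Rightarrow> 'o \<Rightarrow> 'o \<Rightarrow> bool" where
  "Ex_trivial K C A \<longleftrightarrow> Ex K C A = {ezero K C A}"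

definition cosyz_chain :: "('o,'m,'e,'z) ecat_scheme \<Rightarrow> nat \<Rightarrow> (nat \<Rightarrow> 'o) \<Rightarrow> bool" where
  "cosyz_chain K n Ls \<longleftrightarrow>
     (\<forall>k<n. \<exists>d x y. rlz K (Ls (Suc k)) (Ls k) d x y \<and> injective K (cd K x))"

text \<open>Syzygies and cosyzygies chosen by SOME: they are genuine only when K has enough
  projectives, resp. injectives.\<close>

primrec syzygy :: "('o,'m,'e,'z) ecat_scheme \<Rightarrow> 'o \<Rightarrow> nat \<Rightarrow> 'o" where
  "syzygy K X 0 = X"
| "syzygy K X (Suc k) = (SOME A. \<exists>d x y. rlz K (syzygy K X k) A d x y \<and> projective K (cd K x))"

primrec cosyzygy :: "('o,'m,'e,'z) ecat_scheme \<Rightarrow> 'o \<Rightarrow> nat \<Rightarrow> 'o" where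
  "cosyzygy K X 0 = X"
| "cosyzygy K X (Suc k) = (SOME C. \<exists>d x y. rlz K C (cosyzygy K X k) d x y \<and> injective K (cd K x))"

locale extriangulated_category =
  fixes K :: "('o,'m,'e) ecat"
  assumes extriangulated: "extriangulated K"
begin

abbreviation H where "H \<equiv> Hom K"
abbreviation cmp_syntax (infixl "\<cdot>" 70) where "g \<cdot> f \<equiv> cmp K g f"
abbreviation madd_syntax (infixl "\<oplus>" 65) where "f \<oplus> g \<equiv> madd K f g"
abbreviation z where "z \<equiv> mzero K"

lemma extri_axioms:
  "additive_cat K" "ET1 K" "realization K" "additive_realization K" "ET3 K" "ET3op K" "ET4 K"
  using extriangulated unfolding extriangulated_def by blast+

lemma HomD: "f \<in> H A B \<Longrightarrow> f \<in> Mor K \<and> dm K f = A \<and> cd K f = B"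
  unfolding Hom_def by simp

lemma Mor_Hom: "f \<in> Mor K \<Longrightarrow> f \<in> H (dm K f) (cd K f)"
  unfolding Hom_def by simp

lemma cat_ax: "cat_ax K"
  using extri_axioms(1) unfolding additive_cat_def by blast

lemma Mor_ob: "f \<in> Mor K \<Longrightarrow> dm K f \<in> Ob K \<and> cd K f \<in> Ob K"
  using cat_ax unfolding cat_ax_def by blast

lemma Hom_ob: "f \<in> H A B \<Longrightarrow> A \<in> Ob K \<and> B \<in> Ob K"
  using Mor_ob HomD by blast

lemma id_hom: "A \<in> Ob K \<Longrightarrow> idm K A \<in> H A A"
  using cat_ax unfolding cat_ax_def by blast

lemma cmp_hom: "f \<in> H A B \<Longrightarrow> g \<in> H B C \<Longrightarrow> g \<cdot> f \<in> H A C"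
  using cat_ax unfolding cat_ax_def Hom_def by auto

lemma cmp_assoc: "f \<in> H A B \<Longrightarrow> g \<in> H B C \<Longrightarrow> h \<in> H C D \<Longrightarrow> h \<cdot> (g \<cdot> f) = (h \<cdot> g) \<cdot> f"
  using cat_ax unfolding cat_ax_def Hom_def by auto

lemma id_left: "f \<in> H A B \<Longrightarrow> idm K B \<cdot> f = f"
  using cat_ax unfolding cat_ax_def Hom_def by auto

lemma id_right: "f \<in> H A B \<Longrightarrow> f \<cdot> idm K A = f"
  using cat_ax unfolding cat_ax_def Hom_def by auto

lemma Hom_abgrp_all: "\<forall>A\<in>Ob K. \<forall>B\<in>Ob K. abgrp (H A B) (madd K) (z A B)"
  using extri_axioms(1) unfolding additive_cat_def by (elim conjE) assumption

lemma Hom_abgrp: "f \<in> H A B \<Longrightarrow> abgrp (H A B) (madd K) (z A B)"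
  using Hom_abgrp_all Hom_ob by metis

lemma zero_hom: "A \<in> Ob K \<Longrightarrow> B \<in> Ob K \<Longrightarrow> z A B \<in> H A B"
  using Hom_abgrp_all abgrp_zero by metis

lemma add_hom: "f \<in> H A B \<Longrightarrow> g \<in> H A B \<Longrightarrow> f \<oplus> g \<in> H A B"
  by (rule abgrp_closed[OF Hom_abgrp])

lemma add_assoc: "f \<in> H A B \<Longrightarrow> g \<in> H A B \<Longrightarrow> h \<in> H A B \<Longrightarrow> (f \<oplus> g) \<oplus> h = f \<oplus> (g \<oplus> h)"
  by (rule abgrp_assoc[OF Hom_abgrp])

lemma add_comm: "f \<in> H A B \<Longrightarrow> g \<in> H A B \<Longrightarrow> f \<oplus> g = g \<oplus> f"
  by (rule abgrp_comm[OF Hom_abgrp])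

lemma add_zero_left: "f \<in> H A B \<Longrightarrow> z A B \<oplus> f = f"
  by (rule abgrp_left_zero[OF Hom_abgrp])

lemma add_zero_right: "f \<in> H A B \<Longrightarrow> f \<oplus> z A B = f"
  by (rule abgrp_right_zero[OF Hom_abgrp])

lemma cmp_add_left:
  assumes "f \<in> H A B" "f' \<in> H A B" "g \<in> H B C" shows "g \<cdot> (f \<oplus> f') = g \<cdot> f \<oplus> g \<cdot> f'"
proof -
  have "\<forall>A\<in>Ob K. \<forall>B\<in>Ob K. \<forall>C\<in>Ob K. \<forall>f\<in>H A B. \<forall>f'\<in>H A B. \<forall>g\<in>H B C.
        g \<cdot> (f \<oplus> f') = g \<cdot> f \<oplus> g \<cdot> f'"
    using extri_axioms(1) unfolding additive_cat_def by (elim conjE) assumption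
  then show ?thesis using Hom_ob assms by blast
qed

lemma cmp_add_right:
  assumes "f \<in> H A B" "g \<in> H B C" "g' \<in> H B C" shows "(g \<oplus> g') \<cdot> f = g \<cdot> f \<oplus> g' \<cdot> f"
proof -
  have "\<forall>A\<in>Ob K. \<forall>B\<in>Ob K. \<forall>C\<in>Ob K. \<forall>f\<in>H A B. \<forall>g\<in>H B C. \<forall>g'\<in>H B C.
        (g \<oplus> g') \<cdot> f = g \<cdot> f \<oplus> g' \<cdot> f"
    using extri_axioms(1) unfolding additive_cat_def by (elim conjE) assumption
  then show ?thesis using Hom_ob assms by blast
qed

definition mneg where "mneg A B f = abgrp_neg (H A B) (madd K) (z A B) f"

lemma mneg: "f \<in> H A B \<Longrightarrow> mneg A B f \<in> H A B \<and> f \<oplus> mneg A B f = z A B"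
  unfolding mneg_def by (rule abgrp_neg[OF Hom_abgrp])

lemma zero_cmp: assumes f: "f \<in> H A B" and C: "C \<in> Ob K" shows "z B C \<cdot> f = z A C"
proof -
  have B: "B \<in> Ob K" using Hom_ob f by blast
  have zf: "z B C \<cdot> f \<in> H A C" using cmp_hom f zero_hom B C by blast
  have "z B C \<cdot> f = (z B C \<oplus> z B C) \<cdot> f" using add_zero_left zero_hom B C by metis
  also have "\<dots> = z B C \<cdot> f \<oplus> z B C \<cdot> f" using cmp_add_right f zero_hom B C by blast
  finally show ?thesis using abgrp_self_add_eq_self[OF Hom_abgrp[OF zf] zf] by simp
qed

lemma cmp_zero: assumes f: "f \<in> H A B" and C: "C \<in> Ob K" shows "f \<cdot> z C A = z C B"
proof -
  have A: "A \<in> Ob K" using Hom_ob f by blast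
  have fz: "f \<cdot> z C A \<in> H C B" using cmp_hom f zero_hom A C by blast
  have "f \<cdot> z C A = f \<cdot> (z C A \<oplus> z C A)" using add_zero_left zero_hom A C by metis
  also have "\<dots> = f \<cdot> z C A \<oplus> f \<cdot> z C A" using cmp_add_left f zero_hom A C by blast
  finally show ?thesis using abgrp_self_add_eq_self[OF Hom_abgrp[OF fz] fz] by simp
qed

lemma isoI: "f \<in> H A B \<Longrightarrow> g \<in> H B A \<Longrightarrow> g \<cdot> f = idm K A \<Longrightarrow> f \<cdot> g = idm K B \<Longrightarrow> iso K f"
  unfolding iso_def using HomD by metis

text \<open>Variants of the laws above with typing stated through dm and cd, which the
  simplifier can discharge; simp add: mor_simps then normalises composite morphisms.\<close>

named_theorems mor_simps

lemma cmp_Mor[mor_simps]: "f \<in> Mor K \<Longrightarrow> g \<in> Mor K \<Longrightarrow> cd K f = dm K g \<Longrightarrow> g \<cdot> f \<in> Mor K"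
  using cmp_hom Mor_Hom HomD by metis
lemma dm_cmp[mor_simps]: "f \<in> Mor K \<Longrightarrow> g \<in> Mor K \<Longrightarrow> cd K f = dm K g \<Longrightarrow> dm K (g \<cdot> f) = dm K f"
  using cmp_hom Mor_Hom HomD by metis
lemma cd_cmp[mor_simps]: "f \<in> Mor K \<Longrightarrow> g \<in> Mor K \<Longrightarrow> cd K f = dm K g \<Longrightarrow> cd K (g \<cdot> f) = cd K g"
  using cmp_hom Mor_Hom HomD by metis
lemma add_Mor[mor_simps]:
  "f \<in> Mor K \<Longrightarrow> g \<in> Mor K \<Longrightarrow> dm K f = dm K g \<Longrightarrow> cd K f = cd K g \<Longrightarrow> f \<oplus> g \<in> Mor K"
  using add_hom Mor_Hom HomD by metis
lemma dm_add[mor_simps]: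
  "f \<in> Mor K \<Longrightarrow> g \<in> Mor K \<Longrightarrow> dm K f = dm K g \<Longrightarrow> cd K f = cd K g \<Longrightarrow> dm K (f \<oplus> g) = dm K f"
  using add_hom Mor_Hom HomD by metis
lemma cd_add[mor_simps]:
  "f \<in> Mor K \<Longrightarrow> g \<in> Mor K \<Longrightarrow> dm K f = dm K g \<Longrightarrow> cd K f = cd K g \<Longrightarrow> cd K (f \<oplus> g) = cd K f"
  using add_hom Mor_Hom HomD by metis
lemma zero_Mor[mor_simps]: "A \<in> Ob K \<Longrightarrow> B \<in> Ob K \<Longrightarrow> z A B \<in> Mor K"
  using zero_hom HomD by metis
lemma dm_zero[mor_simps]: "A \<in> Ob K \<Longrightarrow> B \<in> Ob K \<Longrightarrow> dm K (z A B) = A"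
  using zero_hom HomD by metis
lemma cd_zero[mor_simps]: "A \<in> Ob K \<Longrightarrow> B \<in> Ob K \<Longrightarrow> cd K (z A B) = B"
  using zero_hom HomD by metis
lemma id_Mor[mor_simps]: "A \<in> Ob K \<Longrightarrow> idm K A \<in> Mor K"
  using id_hom HomD by metis
lemma dm_id[mor_simps]: "A \<in> Ob K \<Longrightarrow> dm K (idm K A) = A"
  using id_hom HomD by metis
lemma cd_id[mor_simps]: "A \<in> Ob K \<Longrightarrow> cd K (idm K A) = A"
  using id_hom HomD by metis
lemma dm_ob[mor_simps]: "f \<in> Mor K \<Longrightarrow> dm K f \<in> Ob K"
  using Mor_ob by blast
lemma cd_ob[mor_simps]: "f \<in> Mor K \<Longrightarrow> cd K f \<in> Ob K"
  using Mor_ob by blast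
lemma cmp_assoc_Mor[mor_simps]: "f \<in> Mor K \<Longrightarrow> g \<in> Mor K \<Longrightarrow> h \<in> Mor K \<Longrightarrow>
   cd K f = dm K g \<Longrightarrow> cd K g = dm K h \<Longrightarrow> (h \<cdot> g) \<cdot> f = h \<cdot> (g \<cdot> f)"
  using cmp_assoc Mor_Hom HomD by metis
lemma cmp_add_left_Mor[mor_simps]: "f \<in> Mor K \<Longrightarrow> f' \<in> Mor K \<Longrightarrow> g \<in> Mor K \<Longrightarrow>
   dm K f = dm K f' \<Longrightarrow> cd K f = cd K f' \<Longrightarrow> cd K f = dm K g \<Longrightarrow> g \<cdot> (f \<oplus> f') = g \<cdot> f \<oplus> g \<cdot> f'"
  using cmp_add_left Mor_Hom HomD by metis
lemma cmp_add_right_Mor[mor_simps]: "f \<in> Mor K \<Longrightarrow> g \<in> Mor K \<Longrightarrow> g' \<in> Mor K \<Longrightarrow>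
   dm K g = dm K g' \<Longrightarrow> cd K g = cd K g' \<Longrightarrow> cd K f = dm K g \<Longrightarrow> (g \<oplus> g') \<cdot> f = g \<cdot> f \<oplus> g' \<cdot> f"
  using cmp_add_right Mor_Hom HomD by metis
lemma id_left_Mor[mor_simps]: "f \<in> Mor K \<Longrightarrow> cd K f = B \<Longrightarrow> idm K B \<cdot> f = f"
  using id_left Mor_Hom by metis
lemma id_right_Mor[mor_simps]: "f \<in> Mor K \<Longrightarrow> dm K f = A \<Longrightarrow> f \<cdot> idm K A = f"
  using id_right Mor_Hom by metis
lemma zero_cmp_Mor[mor_simps]: "f \<in> Mor K \<Longrightarrow> cd K f = B \<Longrightarrow> C \<in> Ob K \<Longrightarrow> z B C \<cdot> f = z (dm K f) C"
  using zero_cmp Mor_Hom by metis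
lemma cmp_zero_Mor[mor_simps]: "f \<in> Mor K \<Longrightarrow> dm K f = B \<Longrightarrow> C \<in> Ob K \<Longrightarrow> f \<cdot> z C B = z C (cd K f)"
  using cmp_zero Mor_Hom by metis
lemma add_zero_left_Mor[mor_simps]: "f \<in> Mor K \<Longrightarrow> dm K f = A \<Longrightarrow> cd K f = B \<Longrightarrow> z A B \<oplus> f = f"
  using add_zero_left Mor_Hom by metis
lemma add_zero_right_Mor[mor_simps]: "f \<in> Mor K \<Longrightarrow> dm K f = A \<Longrightarrow> cd K f = B \<Longrightarrow> f \<oplus> z A B = f"
  using add_zero_right Mor_Hom by metis

lemma add_assoc_Mor: "f \<in> Mor K \<Longrightarrow> g \<in> Mor K \<Longrightarrow> h \<in> Mor K \<Longrightarrow> dm K f = dm K g \<Longrightarrow> cd K f = cd K g \<Longrightarrow>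
   dm K h = dm K g \<Longrightarrow> cd K h = cd K g \<Longrightarrow> (f \<oplus> g) \<oplus> h = f \<oplus> (g \<oplus> h)"
  using add_assoc Mor_Hom HomD by metis
lemma add_comm_Mor: "f \<in> Mor K \<Longrightarrow> g \<in> Mor K \<Longrightarrow> dm K f = dm K g \<Longrightarrow> cd K f = cd K g \<Longrightarrow> f \<oplus> g = g \<oplus> f"
  using add_comm Mor_Hom HomD by metis

lemma cmp_assoc_eq: "g \<cdot> f = h \<Longrightarrow> f \<in> Mor K \<Longrightarrow> g \<in> Mor K \<Longrightarrow> k \<in> Mor K \<Longrightarrow>
   cd K k = dm K f \<Longrightarrow> cd K f = dm K g \<Longrightarrow> g \<cdot> (f \<cdot> k) = h \<cdot> k"
  using cmp_assoc_Mor by metis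

section \<open>The bifunctor E and its realization\<close>

lemma Ex_abgrp: "C \<in> Ob K \<Longrightarrow> A \<in> Ob K \<Longrightarrow> abgrp (Ex K C A) (eadd K C A) (ezero K C A)"
  using extri_axioms(2) unfolding ET1_def by (elim conjE) metis

lemma ezero_in: "C \<in> Ob K \<Longrightarrow> A \<in> Ob K \<Longrightarrow> ezero K C A \<in> Ex K C A"
  by (rule abgrp_zero[OF Ex_abgrp])

lemma pull_in: "c \<in> H C' C \<Longrightarrow> A \<in> Ob K \<Longrightarrow> d \<in> Ex K C A \<Longrightarrow> pull K c A d \<in> Ex K C' A"
  using extri_axioms(2) unfolding ET1_def by (elim conjE) (metis HomD)

lemma push_in: "a \<in> H A A' \<Longrightarrow> C \<in> Ob K \<Longrightarrow> d \<in> Ex K C A \<Longrightarrow> push K a C d \<in> Ex K C A'"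
  using extri_axioms(2) unfolding ET1_def by (elim conjE) (metis HomD)

lemma pull_add: "c \<in> H C' C \<Longrightarrow> A \<in> Ob K \<Longrightarrow> d \<in> Ex K C A \<Longrightarrow> d' \<in> Ex K C A \<Longrightarrow>
   pull K c A (eadd K C A d d') = eadd K C' A (pull K c A d) (pull K c A d')"
  using extri_axioms(2) unfolding ET1_def by (elim conjE) (metis HomD)

lemma push_add: "a \<in> H A A' \<Longrightarrow> C \<in> Ob K \<Longrightarrow> d \<in> Ex K C A \<Longrightarrow> d' \<in> Ex K C A \<Longrightarrow>
   push K a C (eadd K C A d d') = eadd K C A' (push K a C d) (push K a C d')"
  using extri_axioms(2) unfolding ET1_def by (elim conjE) (metis HomD)

lemma pull_id: "C \<in> Ob K \<Longrightarrow> A \<in> Ob K \<Longrightarrow> d \<in> Ex K C A \<Longrightarrow> pull K (idm K C) A d = d"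
  using extri_axioms(2) unfolding ET1_def by (elim conjE) metis

lemma push_id: "C \<in> Ob K \<Longrightarrow> A \<in> Ob K \<Longrightarrow> d \<in> Ex K C A \<Longrightarrow> push K (idm K A) C d = d"
  using extri_axioms(2) unfolding ET1_def by (elim conjE) metis

lemma pull_cmp: "c' \<in> H C'' C' \<Longrightarrow> c \<in> H C' C \<Longrightarrow> A \<in> Ob K \<Longrightarrow> d \<in> Ex K C A \<Longrightarrow>
   pull K (c \<cdot> c') A d = pull K c' A (pull K c A d)"
  using extri_axioms(2) unfolding ET1_def by (elim conjE) (metis HomD)

lemma push_cmp: "a \<in> H A A' \<Longrightarrow> a' \<in> H A' A'' \<Longrightarrow> C \<in> Ob K \<Longrightarrow> d \<in> Ex K C A \<Longrightarrow>
   push K (a' \<cdot> a) C d = push K a' C (push K a C d)"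
  using extri_axioms(2) unfolding ET1_def by (elim conjE) (metis HomD)

lemma pull_madd: "c \<in> H C' C \<Longrightarrow> c' \<in> H C' C \<Longrightarrow> A \<in> Ob K \<Longrightarrow> d \<in> Ex K C A \<Longrightarrow>
   pull K (c \<oplus> c') A d = eadd K C' A (pull K c A d) (pull K c' A d)"
  using extri_axioms(2) unfolding ET1_def by (elim conjE) (metis HomD)

lemma pull_ezero: assumes c: "c \<in> H C' C" and A: "A \<in> Ob K"
  shows "pull K c A (ezero K C A) = ezero K C' A"
proof -
  have ob: "C \<in> Ob K" "C' \<in> Ob K" using c Hom_ob by blast+
  have zi: "ezero K C A \<in> Ex K C A" using ezero_in ob A by blast
  have "pull K c A (ezero K C A) = pull K c A (eadd K C A (ezero K C A) (ezero K C A))"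
    using abgrp_left_zero[OF Ex_abgrp[OF ob(1) A] zi] by simp
  also have "\<dots> = eadd K C' A (pull K c A (ezero K C A)) (pull K c A (ezero K C A))"
    using pull_add c A zi by blast
  finally show ?thesis using abgrp_self_add_eq_self[OF Ex_abgrp[OF ob(2) A]] pull_in c A zi by metis
qed

lemma push_ezero: assumes a: "a \<in> H A A'" and C: "C \<in> Ob K"
  shows "push K a C (ezero K C A) = ezero K C A'"
proof -
  have ob: "A \<in> Ob K" "A' \<in> Ob K" using a Hom_ob by blast+
  have zi: "ezero K C A \<in> Ex K C A" using ezero_in ob C by blast
  have "push K a C (ezero K C A) = push K a C (eadd K C A (ezero K C A) (ezero K C A))"
    using abgrp_left_zero[OF Ex_abgrp[OF C ob(1)] zi] by simp
  also have "\<dots> = eadd K C A' (push K a C (ezero K C A)) (push K a C (ezero K C A))"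
    using push_add a C zi by blast
  finally show ?thesis using abgrp_self_add_eq_self[OF Ex_abgrp[OF C ob(2)]] push_in a C zi by metis
qed

lemma pull_zero_mor: assumes "C' \<in> Ob K" "C \<in> Ob K" "A \<in> Ob K" "d \<in> Ex K C A"
  shows "pull K (z C' C) A d = ezero K C' A"
proof -
  have zh: "z C' C \<in> H C' C" using zero_hom assms by blast
  have "pull K (z C' C) A d = pull K (z C' C \<oplus> z C' C) A d" using add_zero_left zh by simp
  also have "\<dots> = eadd K C' A (pull K (z C' C) A d) (pull K (z C' C) A d)"
    using pull_madd zh assms by blast
  finally show ?thesis using abgrp_self_add_eq_self[OF Ex_abgrp] pull_in zh assms by metis
qed

lemma rlz_exists: "C \<in> Ob K \<Longrightarrow> A \<in> Ob K \<Longrightarrow> d \<in> Ex K C A \<Longrightarrow> \<exists>x y. rlz K C A d x y"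
  using extri_axioms(3) unfolding realization_def by (elim conjE) blast

lemma rlzD:
  assumes "rlz K C A d x y"
  shows "C \<in> Ob K" "A \<in> Ob K" "d \<in> Ex K C A" "x \<in> H A (cd K x)" "y \<in> H (cd K x) C"
    "cd K x \<in> Ob K"
proof -
  have "C \<in> Ob K \<and> A \<in> Ob K \<and> d \<in> Ex K C A \<and>
        x \<in> Mor K \<and> y \<in> Mor K \<and> dm K x = A \<and> cd K x = dm K y \<and> cd K y = C"
    using extri_axioms(3) assms unfolding realization_def by (elim conjE) blast
  then show "C \<in> Ob K" "A \<in> Ob K" "d \<in> Ex K C A" "x \<in> H A (cd K x)" "y \<in> H (cd K x) C"
    "cd K x \<in> Ob K"
    unfolding Hom_def using Mor_ob by auto
qed

lemma rlz_unique: "rlz K C A d x y \<Longrightarrow> rlz K C A d x' y' \<Longrightarrow> seq_eq K x y x' y'"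
  by (rule extri_axioms(3)[unfolded realization_def, THEN conjunct2, THEN conjunct2, THEN conjunct1,
      rule_format]) (intro conjI)

lemma rlz_seq_eq: "rlz K C A d x y \<Longrightarrow> seq_eq K x y x' y' \<Longrightarrow> rlz K C A d x' y'"
  by (rule extri_axioms(3)[unfolded realization_def, THEN conjunct2, THEN conjunct2, THEN conjunct2,
      THEN conjunct1, rule_format]) (intro conjI)

lemma rlz_morphism: "rlz K C A d x y \<Longrightarrow> rlz K C' A' d' x' y' \<Longrightarrow> a \<in> H A A' \<Longrightarrow> c \<in> H C C' \<Longrightarrow>
   push K a C d = pull K c A' d' \<Longrightarrow> \<exists>b\<in>H (cd K x) (cd K x'). b \<cdot> x = x' \<cdot> a \<and> c \<cdot> y = y' \<cdot> b"
  by (rule extri_axioms(3)[unfolded realization_def, THEN conjunct2, THEN conjunct2, THEN conjunct2,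
      THEN conjunct2, rule_format]) (intro conjI)

lemma ET3_rule: "rlz K C A d x y \<Longrightarrow> rlz K C' A' d' x' y' \<Longrightarrow> a \<in> H A A' \<Longrightarrow>
   b \<in> H (cd K x) (cd K x') \<Longrightarrow> x' \<cdot> a = b \<cdot> x \<Longrightarrow>
   \<exists>c\<in>H C C'. c \<cdot> y = y' \<cdot> b \<and> push K a C d = pull K c A' d'"
  by (rule extri_axioms(5)[unfolded ET3_def, rule_format]) (intro conjI)

lemma ET3op_rule: "rlz K C A d x y \<Longrightarrow> rlz K C' A' d' x' y' \<Longrightarrow> c \<in> H C C' \<Longrightarrow>
   b \<in> H (cd K x) (cd K x') \<Longrightarrow> c \<cdot> y = y' \<cdot> b \<Longrightarrow>
   \<exists>a\<in>H A A'. x' \<cdot> a = b \<cdot> x \<and> push K a C d = pull K c A' d'"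
  by (rule extri_axioms(6)[unfolded ET3op_def, rule_format]) (intro conjI)

lemma ET4_rule: "rlz K D A d f f' \<Longrightarrow> rlz K F B d' g g' \<Longrightarrow> cd K f = B \<Longrightarrow> cd K g = C \<Longrightarrow>
   \<exists>E h h' e1 e2 d''. E \<in> Ob K \<and> h \<in> H A C \<and> h' \<in> H C E \<and> e1 \<in> H D E \<and> e2 \<in> H E F \<and>
     h = g \<cdot> f \<and> h' \<cdot> g = e1 \<cdot> f' \<and> e2 \<cdot> h' = g' \<and> rlz K E A d'' h h' \<and>
     rlz K F D (push K f' F d') e1 e2 \<and> pull K e1 A d'' = d \<and> push K f E d'' = pull K e2 B d'"
  by (rule extri_axioms(7)[unfolded ET4_def, rule_format]) (intro conjI)

lemma biprod_exists: "A \<in> Ob K \<Longrightarrow> B \<in> Ob K \<Longrightarrow> \<exists>S i1 i2 p1 p2. biprod K A B S i1 i2 p1 p2"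
  using extri_axioms(1) unfolding additive_cat_def by (elim conjE) metis

lemma biprodD:
  assumes "biprod K A B S i1 i2 p1 p2"
  shows "S \<in> Ob K" "i1 \<in> H A S" "i2 \<in> H B S" "p1 \<in> H S A" "p2 \<in> H S B"
    "p1 \<cdot> i1 = idm K A" "p2 \<cdot> i2 = idm K B" "p2 \<cdot> i1 = z A B" "p1 \<cdot> i2 = z B A"
    "i1 \<cdot> p1 \<oplus> i2 \<cdot> p2 = idm K S"
  using assms unfolding biprod_def by blast+

lemma biprod_swap: "biprod K A B S i1 i2 p1 p2 \<Longrightarrow> biprod K B A S i2 i1 p2 p1"
  using biprodD[of A B S i1 i2 p1 p2] add_comm cmp_hom unfolding biprod_def by metis

lemma split_rlz:
  "A \<in> Ob K \<Longrightarrow> C \<in> Ob K \<Longrightarrow> biprod K A C S i1 i2 p1 p2 \<Longrightarrow> rlz K C A (ezero K C A) i1 p2"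
  using extri_axioms(4) unfolding additive_realization_def by (elim conjE) blast

lemma rlz_biprod:
  "biprod K A A' SA iA iA' pA pA' \<Longrightarrow> biprod K B B' SB iB iB' pB pB' \<Longrightarrow>
   biprod K C C' SC iC iC' pC pC' \<Longrightarrow> rlz K C A d x y \<Longrightarrow> rlz K C' A' d' x' y' \<Longrightarrow>
   cd K x = B \<Longrightarrow> cd K x' = B' \<Longrightarrow>
   rlz K SC SA (eadd K SC SA (push K iA SC (pull K pC A d)) (push K iA' SC (pull K pC' A' d')))
     (iB \<cdot> (x \<cdot> pA) \<oplus> iB' \<cdot> (x' \<cdot> pA')) (iC \<cdot> (y \<cdot> pB) \<oplus> iC' \<cdot> (y' \<cdot> pB'))"
  by (rule extri_axioms(4)[unfolded additive_realization_def, THEN conjunct2, rule_format]) (intro conjI)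

definition zobj where "zobj = (SOME Z. zero_obj K Z)"

lemma zero_obj_zobj: "zero_obj K zobj"
  unfolding zobj_def using extri_axioms(1) unfolding additive_cat_def by (elim conjE) (rule someI_ex)

lemma zobj_ob: "zobj \<in> Ob K"
  using zero_obj_zobj unfolding zero_obj_def by blast

lemma cmp_through_zobj: assumes f: "f \<in> H A zobj" and g: "g \<in> H zobj B" shows "g \<cdot> f = z A B"
proof -
  have A: "A \<in> Ob K" using f Hom_ob by blast
  then have "f = z A zobj" using zero_obj_zobj f unfolding zero_obj_def by blast
  then show ?thesis using cmp_zero g A by simp
qed

lemma id_zobj: "idm K zobj = z zobj zobj"
  using zero_obj_zobj id_hom zobj_ob unfolding zero_obj_def by blast

lemma biprod_zobj_left: assumes "Z \<in> Ob K" shows "biprod K zobj Z Z (z zobj Z) (idm K Z) (z Z zobj) (idm K Z)"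
  unfolding biprod_def using assms
  by (simp add: mor_simps id_hom zero_hom zobj_ob id_zobj)

lemma biprod_zobj_right: assumes "Z \<in> Ob K" shows "biprod K Z zobj Z (idm K Z) (z zobj Z) (idm K Z) (z Z zobj)"
  unfolding biprod_def using assms
  by (simp add: mor_simps id_hom zero_hom zobj_ob id_zobj)

lemma rlz_from_zobj: "Z \<in> Ob K \<Longrightarrow> rlz K Z zobj (ezero K Z zobj) (z zobj Z) (idm K Z)"
  using split_rlz[OF zobj_ob _ biprod_zobj_left] by blast

lemma rlz_to_zobj: "Z \<in> Ob K \<Longrightarrow> rlz K zobj Z (ezero K zobj Z) (idm K Z) (z Z zobj)"
  using split_rlz[OF _ zobj_ob biprod_zobj_right] by blast

section \<open>Exactness of E-triangles and dimension shifting\<close>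

lemma rlz_cmp_zero: assumes r: "rlz K C A d x y" shows "y \<cdot> x = z A C"
proof -
  note D = rlzD[OF r]
  have y: "y \<in> H (cd K x) (cd K (z zobj C))" using D(1,5) zero_hom zobj_ob HomD by metis
  obtain a where "a \<in> H A zobj" "z zobj C \<cdot> a = y \<cdot> x"
    using ET3op_rule[OF r rlz_from_zobj[OF D(1)] id_hom[OF D(1)] y] id_left D(5) by metis
  then show ?thesis using cmp_through_zobj zero_hom zobj_ob D(1) by metis
qed

lemma push_inflation_ezero: assumes r: "rlz K C A d x y" shows "push K x C d = ezero K C (cd K x)"
proof -
  note D = rlzD[OF r]
  have i: "idm K (cd K x) \<in> H (cd K x) (cd K (idm K (cd K x)))" using id_hom D(6) HomD by metis
  obtain c where "c \<in> H C zobj" "push K x C d = pull K c (cd K x) (ezero K zobj (cd K x))"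
    using ET3_rule[OF r rlz_to_zobj[OF D(6)] D(4) i] by blast
  then show ?thesis using pull_ezero D(6) by simp
qed

lemma pull_deflation_ezero: assumes r: "rlz K C A d x y" shows "pull K y A d = ezero K (cd K x) A"
proof -
  note D = rlzD[OF r]
  have i: "idm K (cd K x) \<in> H (cd K (z zobj (cd K x))) (cd K x)"
    using id_hom D(6) zero_hom zobj_ob HomD by metis
  obtain a where "a \<in> H zobj A" "push K a (cd K x) (ezero K (cd K x) zobj) = pull K y A d"
    using ET3op_rule[OF rlz_from_zobj[OF D(6)] r D(5) i] by blast
  then show ?thesis using push_ezero D(6) by metis
qed

lemma push_zero_imp_factors_through_inflation:
  assumes r: "rlz K C A d x y" and f: "f \<in> H A Y" and f0: "push K f C d = ezero K C Y"
  shows "\<exists>g\<in>H (cd K x) Y. g \<cdot> x = f"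
proof -
  note D = rlzD[OF r]
  have Y: "Y \<in> Ob K" using f Hom_ob by blast
  obtain S i1 i2 p1 p2 where bp: "biprod K Y C S i1 i2 p1 p2" using biprod_exists Y D(1) by blast
  note B = biprodD[OF bp]
  have "push K f C d = pull K (idm K C) Y (ezero K C Y)" using f0 pull_id D(1) Y ezero_in by simp
  then obtain b where b: "b \<in> H (cd K x) (cd K i1)" "b \<cdot> x = i1 \<cdot> f"
    using rlz_morphism[OF r split_rlz[OF Y D(1) bp] f id_hom[OF D(1)]] by blast
  have bS: "b \<in> H (cd K x) S" using b(1) HomD B(2) by metis
  have "(p1 \<cdot> b) \<cdot> x = p1 \<cdot> (b \<cdot> x)" using cmp_assoc D(4) bS B(4) by metis
  also have "\<dots> = (p1 \<cdot> i1) \<cdot> f" using b(2) cmp_assoc f B by metis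
  also have "\<dots> = f" using B(6) id_left f by simp
  finally show ?thesis using cmp_hom bS B(4) by blast
qed

lemma pull_zero_imp_lifts_through_deflation:
  assumes r: "rlz K C A d x y" and f: "f \<in> H V C" and f0: "pull K f A d = ezero K V A"
  shows "\<exists>g\<in>H V (cd K x). y \<cdot> g = f"
proof -
  note D = rlzD[OF r]
  have V: "V \<in> Ob K" using f Hom_ob by blast
  obtain S i1 i2 p1 p2 where bp: "biprod K A V S i1 i2 p1 p2" using biprod_exists V D(2) by blast
  note B = biprodD[OF bp]
  have "push K (idm K A) V (ezero K V A) = pull K f A d" using f0 push_id D(2) V ezero_in by simp
  then obtain b where b: "b \<in> H (cd K i1) (cd K x)" "f \<cdot> p2 = y \<cdot> b"
    using rlz_morphism[OF split_rlz[OF D(2) V bp] r id_hom[OF D(2)] f] by blast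
  have bS: "b \<in> H S (cd K x)" using b(1) HomD B(2) by metis
  have "y \<cdot> (b \<cdot> i2) = (y \<cdot> b) \<cdot> i2" using cmp_assoc D(5) bS B(3) by metis
  also have "\<dots> = f \<cdot> (p2 \<cdot> i2)" using b(2) cmp_assoc f B by metis
  also have "\<dots> = f" using B(7) id_right f by simp
  finally show ?thesis using cmp_hom bS B(3) by blast
qed

lemma pull_deflation_zero_imp_push:
  assumes r: "rlz K C A d x y" and Y: "Y \<in> Ob K" and e: "e \<in> Ex K C Y"
    and e0: "pull K y Y e = ezero K (cd K x) Y"
  shows "\<exists>f\<in>H A Y. push K f C d = e"
proof -
  note D = rlzD[OF r]
  obtain m m' where t: "rlz K C Y e m m'" using rlz_exists D(1) Y e by blast
  obtain g where g: "g \<in> H (cd K x) (cd K m)" "m' \<cdot> g = y"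
    using pull_zero_imp_lifts_through_deflation[OF t D(5) e0] by blast
  have "idm K C \<cdot> y = m' \<cdot> g" using g id_left D(5) by simp
  then obtain a where "a \<in> H A Y" "push K a C d = pull K (idm K C) Y e"
    using ET3op_rule[OF r t id_hom[OF D(1)] g(1)] by blast
  then show ?thesis using pull_id D(1) Y e by metis
qed

lemma push_inflation_zero_imp_pull:
  assumes r: "rlz K C A d x y" and V: "V \<in> Ob K" and e: "e \<in> Ex K V A"
    and e0: "push K x V e = ezero K V (cd K x)"
  shows "\<exists>f\<in>H V C. pull K f A d = e"
proof -
  note D = rlzD[OF r]
  obtain m m' where t: "rlz K V A e m m'" using rlz_exists D(2) V e by blast
  obtain g where g: "g \<in> H (cd K m) (cd K x)" "g \<cdot> m = x"
    using push_zero_imp_factors_through_inflation[OF t D(4) e0] by blast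
  have "x \<cdot> idm K A = g \<cdot> m" using g id_right D(4) by simp
  then obtain c where "c \<in> H V C" "push K (idm K A) V e = pull K c A d"
    using ET3_rule[OF t r id_hom[OF D(2)] g(1)] by blast
  then show ?thesis using push_id D(2) V e by metis
qed

lemma cmp_zero_imp_lifts_through_inflation:
  assumes r: "rlz K C A d x y" and u: "u \<in> H V (cd K x)" and u0: "y \<cdot> u = z V C"
  shows "\<exists>v\<in>H V A. x \<cdot> v = u"
proof -
  note D = rlzD[OF r]
  have V: "V \<in> Ob K" using u Hom_ob by blast
  have zC: "z zobj C \<in> H zobj C" using zero_hom D(1) zobj_ob by blast
  have u': "u \<in> H (cd K (idm K V)) (cd K x)" using u HomD id_hom V by metis
  have "z zobj C \<cdot> z V zobj = y \<cdot> u" using u0 cmp_through_zobj zC zero_hom zobj_ob V by metis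
  then obtain a where "a \<in> H V A" "x \<cdot> a = u \<cdot> idm K V"
    using ET3op_rule[OF rlz_to_zobj[OF V] r zC u'] by blast
  then show ?thesis using id_right u by metis
qed

text \<open>In the applications A -> B -> C is a syzygy triangle (B projective) and
  Y -> B' -> S a cosyzygy triangle (B' injective).\<close>

lemma Ex_trivial_shift_right:
  assumes r: "rlz K C A d x y" and r': "rlz K S Y d' x' y'"
    and B: "Ex_trivial K (cd K x) S" and B': "Ex_trivial K C (cd K x')" and AY: "Ex_trivial K A Y"
  shows "Ex_trivial K C S"
proof -
  note D = rlzD[OF r] and D' = rlzD[OF r']
  have "e = ezero K C S" if e: "e \<in> Ex K C S" for e
  proof -
    have "pull K y S e = ezero K (cd K x) S"
      using B pull_in D(5) D'(1) e unfolding Ex_trivial_def by blast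
    then obtain f where f: "f \<in> H A S" "push K f C d = e"
      using pull_deflation_zero_imp_push[OF r D'(1) e] by blast
    have "pull K f Y d' = ezero K A Y" using AY pull_in f(1) D'(2,3) unfolding Ex_trivial_def by blast
    then obtain h where h: "h \<in> H A (cd K x')" "y' \<cdot> h = f"
      using pull_zero_imp_lifts_through_deflation[OF r' f(1)] by blast
    have "push K h C d = ezero K C (cd K x')"
      using B' push_in h(1) D(1,3) unfolding Ex_trivial_def by blast
    then obtain h' where h': "h' \<in> H (cd K x) (cd K x')" "h' \<cdot> x = h"
      using push_zero_imp_factors_through_inflation[OF r h(1)] by blast
    have "f = (y' \<cdot> h') \<cdot> x" using h h' cmp_assoc D(4) D'(5) by metis
    then have "push K f C d = push K (y' \<cdot> h') C (push K x C d)"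
      using push_cmp D(4) cmp_hom h'(1) D'(5) D(1,3) by metis
    also have "\<dots> = ezero K C S"
      using push_inflation_ezero[OF r] push_ezero cmp_hom h'(1) D'(5) D(1) by simp
    finally show ?thesis using f by simp
  qed
  then show ?thesis using ezero_in D(1) D'(1) unfolding Ex_trivial_def by blast
qed

lemma Ex_trivial_shift_left:
  assumes r: "rlz K C A d x y" and r': "rlz K S Y d' x' y'"
    and B': "Ex_trivial K A (cd K x')" and B: "Ex_trivial K (cd K x) Y" and CS: "Ex_trivial K C S"
  shows "Ex_trivial K A Y"
proof -
  note D = rlzD[OF r] and D' = rlzD[OF r']
  have "e = ezero K A Y" if e: "e \<in> Ex K A Y" for e
  proof -
    have "push K x' A e = ezero K A (cd K x')"
      using B' push_in D'(4) D(2) e unfolding Ex_trivial_def by blast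
    then obtain f where f: "f \<in> H A S" "pull K f Y d' = e"
      using push_inflation_zero_imp_pull[OF r' D(2) e] by blast
    have "push K f C d = ezero K C S" using CS push_in f(1) D(1,3) unfolding Ex_trivial_def by blast
    then obtain g where g: "g \<in> H (cd K x) S" "g \<cdot> x = f"
      using push_zero_imp_factors_through_inflation[OF r f(1)] by blast
    have "pull K g Y d' = ezero K (cd K x) Y"
      using B pull_in g(1) D'(2,3) unfolding Ex_trivial_def by blast
    then obtain g' where g': "g' \<in> H (cd K x) (cd K x')" "y' \<cdot> g' = g"
      using pull_zero_imp_lifts_through_deflation[OF r' g(1)] by blast
    have "f = y' \<cdot> (g' \<cdot> x)" using g g' cmp_assoc D(4) D'(5) by metis
    then have "pull K f Y d' = pull K (g' \<cdot> x) Y (pull K y' Y d')"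
      using pull_cmp D(4) cmp_hom g'(1) D'(5) D'(2,3) by metis
    also have "\<dots> = ezero K A Y"
      using pull_deflation_ezero[OF r'] pull_ezero cmp_hom g'(1) D(4) D'(2) by simp
    finally show ?thesis using f by simp
  qed
  then show ?thesis using ezero_in D(2) D'(2) unfolding Ex_trivial_def by blast
qed

lemma projective_Ex_trivial: "projective K P \<Longrightarrow> X \<in> Ob K \<Longrightarrow> Ex_trivial K P X"
  unfolding projective_def Ex_trivial_def by blast

lemma injective_Ex_trivial: "injective K I \<Longrightarrow> X \<in> Ob K \<Longrightarrow> Ex_trivial K X I"
  unfolding injective_def Ex_trivial_def by blast

lemma Ex_trivial_syz_iff_cosyz:
  "syz_chain K k Ks \<Longrightarrow> cosyz_chain K k Ls \<Longrightarrow> Ks 0 \<in> Ob K \<Longrightarrow> Ls 0 \<in> Ob K \<Longrightarrow>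
   Ex_trivial K (Ks k) (Ls 0) \<longleftrightarrow> Ex_trivial K (Ks 0) (Ls k)"
proof (induction k arbitrary: Ks)
  case 0
  then show ?case by simp
next
  case (Suc k)
  obtain d x y where t: "rlz K (Ks 0) (Ks (Suc 0)) d x y" "projective K (cd K x)"
    using Suc.prems(1) unfolding syz_chain_def by blast
  obtain d' x' y' where t': "rlz K (Ls (Suc k)) (Ls k) d' x' y'" "injective K (cd K x')"
    using Suc.prems(2) unfolding cosyz_chain_def by blast
  note D = rlzD[OF t(1)] and D' = rlzD[OF t'(1)]
  have "syz_chain K k (\<lambda>j. Ks (Suc j))" "cosyz_chain K k Ls"
    using Suc.prems(1,2) unfolding syz_chain_def cosyz_chain_def by auto
  then have "Ex_trivial K (Ks (Suc k)) (Ls 0) \<longleftrightarrow> Ex_trivial K (Ks (Suc 0)) (Ls k)"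
    using Suc.IH D(2) Suc.prems(4) by simp
  also have "\<dots> \<longleftrightarrow> Ex_trivial K (Ks 0) (Ls (Suc k))"
    using Ex_trivial_shift_right[OF t(1) t'(1)] Ex_trivial_shift_left[OF t(1) t'(1)]
      projective_Ex_trivial[OF t(2)] injective_Ex_trivial[OF t'(2)] D D' by blast
  finally show ?case .
qed

end

locale extriangulated_enough = extriangulated_category +
  assumes enough_proj: "enough_projectives K" and enough_inj: "enough_injectives K"
begin

lemma syzygy_step:
  assumes "X \<in> Ob K"
  shows "syzygy K X k \<in> Ob K \<and>
    (\<exists>d x y. rlz K (syzygy K X k) (syzygy K X (Suc k)) d x y \<and> projective K (cd K x))"
proof (induction k)
  case 0
  have "\<exists>A d x y. rlz K X A d x y \<and> projective K (cd K x)"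
    using enough_proj assms unfolding enough_projectives_def by blast
  then show ?case using assms by simp (rule someI_ex)
next
  case (Suc k)
  then have ob: "syzygy K X (Suc k) \<in> Ob K" using rlzD by blast
  then have "\<exists>A d x y. rlz K (syzygy K X (Suc k)) A d x y \<and> projective K (cd K x)"
    using enough_proj unfolding enough_projectives_def by blast
  then have "\<exists>d x y. rlz K (syzygy K X (Suc k)) (syzygy K X (Suc (Suc k))) d x y \<and> projective K (cd K x)"
    by simp (rule someI_ex)
  with ob show ?case by blast
qed

lemma cosyzygy_step:
  assumes "X \<in> Ob K"
  shows "cosyzygy K X k \<in> Ob K \<and>
    (\<exists>d x y. rlz K (cosyzygy K X (Suc k)) (cosyzygy K X k) d x y \<and> injective K (cd K x))"
proof (induction k)
  case 0
  have "\<exists>C d x y. rlz K C X d x y \<and> injective K (cd K x)"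
    using enough_inj assms unfolding enough_injectives_def by blast
  then show ?case using assms by simp (rule someI_ex)
next
  case (Suc k)
  then have ob: "cosyzygy K X (Suc k) \<in> Ob K" using rlzD by blast
  then have "\<exists>C d x y. rlz K C (cosyzygy K X (Suc k)) d x y \<and> injective K (cd K x)"
    using enough_inj unfolding enough_injectives_def by blast
  then have "\<exists>d x y. rlz K (cosyzygy K X (Suc (Suc k))) (cosyzygy K X (Suc k)) d x y \<and> injective K (cd K x)"
    by simp (rule someI_ex)
  with ob show ?case by blast
qed

lemma syz_chain_syzygy: "X \<in> Ob K \<Longrightarrow> syz_chain K n (syzygy K X)"
  unfolding syz_chain_def using syzygy_step by blast

lemma cosyz_chain_cosyzygy: "X \<in> Ob K \<Longrightarrow> cosyz_chain K n (cosyzygy K X)"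
  unfolding cosyz_chain_def using cosyzygy_step by blast

lemma ext_vanish_iff_cosyzygy:
  assumes "X \<in> Ob K" "V \<in> Ob K"
  shows "ext_vanish K i X V \<longleftrightarrow> Ex_trivial K X (cosyzygy K V (i - 1))"
proof
  assume "ext_vanish K i X V"
  then obtain Ks where "Ks 0 = X" "syz_chain K (i - 1) Ks" "Ex_trivial K (Ks (i - 1)) V"
    unfolding ext_vanish_def Ex_trivial_def by blast
  then show "Ex_trivial K X (cosyzygy K V (i - 1))"
    using Ex_trivial_syz_iff_cosyz cosyz_chain_cosyzygy assms by fastforce
next
  assume "Ex_trivial K X (cosyzygy K V (i - 1))"
  then have "Ex_trivial K (syzygy K X (i - 1)) V"
    using Ex_trivial_syz_iff_cosyz[OF syz_chain_syzygy cosyz_chain_cosyzygy] assms by simp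
  moreover have "syzygy K X 0 = X" by simp
  ultimately show "ext_vanish K i X V"
    unfolding ext_vanish_def Ex_trivial_def using syz_chain_syzygy[OF assms(1)] by blast
qed

lemma ext_vanish_iff_syzygy:
  assumes "X \<in> Ob K" "V \<in> Ob K"
  shows "ext_vanish K i X V \<longleftrightarrow> Ex_trivial K (syzygy K X (i - 1)) V"
  using ext_vanish_iff_cosyzygy Ex_trivial_syz_iff_cosyz[OF syz_chain_syzygy cosyz_chain_cosyzygy] assms
  by simp

end

section \<open>Cones\<close>

context extriangulated_category
begin

lemma square_zero_unipotent_inverse:
  assumes h: "h \<in> H N N" and hh: "h \<cdot> h = z N N"
  shows "(idm K N \<oplus> h) \<cdot> (idm K N \<oplus> mneg N N h) = idm K N"
    "(idm K N \<oplus> mneg N N h) \<cdot> (idm K N \<oplus> h) = idm K N"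
proof -
  define n where "n = mneg N N h"
  have n: "n \<in> H N N" "h \<oplus> n = z N N" using mneg[OF h] n_def by auto
  have N: "N \<in> Ob K" using h Hom_ob by blast
  note T = HomD[OF h] HomD[OF n(1)] N
  have "h \<cdot> h \<oplus> h \<cdot> n = z N N" using n T cmp_add_left_Mor[of h n h] by (simp add: mor_simps)
  then have hn: "h \<cdot> n = z N N" using T hh by (simp add: mor_simps)
  have "h \<cdot> h \<oplus> n \<cdot> h = z N N" using n T cmp_add_right_Mor[of h h n] by (simp add: mor_simps)
  then have nh: "n \<cdot> h = z N N" using T hh by (simp add: mor_simps)
  have "(idm K N \<oplus> h) \<cdot> (idm K N \<oplus> n) = (idm K N \<oplus> h) \<oplus> n" using T hn by (simp add: mor_simps)
  also have "\<dots> = idm K N" using T n by (simp add: add_assoc_Mor mor_simps)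
  finally show "(idm K N \<oplus> h) \<cdot> (idm K N \<oplus> mneg N N h) = idm K N" using n_def by simp
  have "(idm K N \<oplus> n) \<cdot> (idm K N \<oplus> h) = (idm K N \<oplus> n) \<oplus> h" using T nh by (simp add: mor_simps)
  also have "\<dots> = idm K N" using T n add_comm_Mor[of n h] by (simp add: add_assoc_Mor mor_simps)
  finally show "(idm K N \<oplus> mneg N N h) \<cdot> (idm K N \<oplus> h) = idm K N" using n_def by simp
qed

lemma rlz_twist_iso:
  assumes r: "rlz K C A d x y" and t: "t \<in> H (cd K x) (cd K x)" and t': "t' \<in> H (cd K x) (cd K x)"
    and tt': "t' \<cdot> t = idm K (cd K x)" "t \<cdot> t' = idm K (cd K x)"
  shows "rlz K C A d (t \<cdot> x) (y \<cdot> t')"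
proof -
  note D = rlzD[OF r]
  note T = HomD[OF t] HomD[OF t'] HomD[OF D(4)] HomD[OF D(5)]
  have "seq_eq K x y (t \<cdot> x) (y \<cdot> t')"
    unfolding seq_eq_def
  proof (intro conjI)
    show "\<exists>b\<in>H (cd K x) (cd K (t \<cdot> x)). iso K b \<and> b \<cdot> x = t \<cdot> x \<and> y \<cdot> t' \<cdot> b = y"
    proof (rule bexI[of _ t], intro conjI)
      show "iso K t" using isoI[OF t t' tt'] .
      show "y \<cdot> t' \<cdot> t = y" using T tt' by (simp add: mor_simps)
    qed (use T t in \<open>simp_all add: mor_simps\<close>)
  qed (use T in \<open>simp_all add: mor_simps\<close>)
  then show ?thesis using rlz_seq_eq[OF r] by blast
qed

text \<open>The graph (1, f) of f : A -> B is an inflation of the split triangle: it is the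
  canonical inflation twisted by the automorphism 1 + i2 f p1, whose nilpotent part
  squares to zero.\<close>

lemma split_rlz_graph:
  assumes bp: "biprod K A B S i1 i2 p1 p2" and f: "f \<in> H A B"
  shows "\<exists>q. rlz K B A (ezero K B A) (i1 \<oplus> i2 \<cdot> f) q"
proof -
  note P = biprodD[OF bp]
  have ob: "A \<in> Ob K" "B \<in> Ob K" using f Hom_ob by blast+
  define h where "h = (i2 \<cdot> f) \<cdot> p1"
  have h: "h \<in> H S S" unfolding h_def using cmp_hom P f by metis
  note T = HomD[OF P(2)] HomD[OF P(3)] HomD[OF P(4)] HomD[OF P(5)] HomD[OF f] P(1) ob
  have "h \<cdot> h = z S S" unfolding h_def using T cmp_assoc_eq[OF P(9)] by (simp add: mor_simps)
  note inv = square_zero_unipotent_inverse[OF h this]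
  have t: "idm K S \<oplus> h \<in> H S S" "idm K S \<oplus> mneg S S h \<in> H S S"
    using add_hom h mneg[OF h] id_hom P(1) by blast+
  have "rlz K B A (ezero K B A) ((idm K S \<oplus> h) \<cdot> i1) (p2 \<cdot> (idm K S \<oplus> mneg S S h))"
    using rlz_twist_iso[OF split_rlz[OF ob bp]] t inv T by simp
  moreover have "(idm K S \<oplus> h) \<cdot> i1 = i1 \<oplus> i2 \<cdot> f"
    unfolding h_def using T P(6) cmp_assoc_eq[OF P(6)] by (simp add: mor_simps)
  ultimately show ?thesis by auto
qed

lemma split_rlz_iso_biprod:
  assumes r: "rlz K C A (ezero K C A) x y"
  shows "\<exists>S i1 i2 p1 p2 b. biprod K A C S i1 i2 p1 p2 \<and> b \<in> H (cd K x) S \<and> iso K b"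
proof -
  note D = rlzD[OF r]
  obtain S i1 i2 p1 p2 where bp: "biprod K A C S i1 i2 p1 p2" using biprod_exists D by blast
  have "seq_eq K x y i1 p2" using rlz_unique[OF r split_rlz[OF D(2) D(1) bp]] .
  then obtain b where "b \<in> H (cd K x) (cd K i1)" "iso K b" unfolding seq_eq_def by blast
  moreover have "cd K i1 = S" using biprodD(2)[OF bp] HomD by blast
  ultimately show ?thesis using bp by metis
qed

text \<open>Since t q = 0 and t^* d = 0, t = q s; then q (s q) = t q = 0, so s q = f v, and
  t t = q (s q) s = (q f) v s = 0.\<close>

lemma rlz_endo_square_zero:
  assumes r: "rlz K E A d f q" and t: "t \<in> H E E" and tq: "t \<cdot> q = z (cd K f) E"
    and td: "pull K t A d = ezero K E A"
  shows "t \<cdot> t = z E E"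
proof -
  note D = rlzD[OF r]
  obtain s where s: "s \<in> H E (cd K f)" "q \<cdot> s = t"
    using pull_zero_imp_lifts_through_deflation[OF r t td] by blast
  note T = HomD[OF t] HomD[OF s(1)] HomD[OF D(4)] HomD[OF D(5)] D(1,2,6)
  have "q \<cdot> (s \<cdot> q) = z (cd K f) E" using T tq s(2) by (metis cmp_assoc_Mor)
  then obtain v where v: "v \<in> H (cd K f) A" "f \<cdot> v = s \<cdot> q"
    using cmp_zero_imp_lifts_through_inflation[OF r] cmp_hom s(1) D(5) by blast
  have "t \<cdot> t = (q \<cdot> s) \<cdot> (q \<cdot> s)" using s(2) by simp
  also have "\<dots> = q \<cdot> ((s \<cdot> q) \<cdot> s)" using T by (simp add: mor_simps)
  also have "\<dots> = q \<cdot> ((f \<cdot> v) \<cdot> s)" using v(2) by simp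
  also have "\<dots> = z E E"
    using T HomD[OF v(1)] cmp_assoc_eq[OF rlz_cmp_zero[OF r]] by (simp add: mor_simps)
  finally show ?thesis .
qed

lemma rlz_endo_invertible:
  assumes r: "rlz K E A d f q" and u: "u \<in> H E E" and uq: "u \<cdot> q = q" and ud: "pull K u A d = d"
  shows "\<exists>v\<in>H E E. u \<cdot> v = idm K E \<and> v \<cdot> u = idm K E"
proof -
  note D = rlzD[OF r]
  define I where "I = idm K E"
  define nI where "nI = mneg E E I"
  have I: "I \<in> H E E" using id_hom D(1) I_def by simp
  have nI: "nI \<in> H E E" "I \<oplus> nI = z E E" using mneg[OF I] nI_def by auto
  define t where "t = u \<oplus> nI"
  have t: "t \<in> H E E" using add_hom u nI t_def by blast
  note T = HomD[OF u] HomD[OF nI(1)] HomD[OF I] HomD[OF t] HomD[OF D(4)] HomD[OF D(5)] D(1,2,6)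
  have "q \<oplus> nI \<cdot> q = I \<cdot> q \<oplus> nI \<cdot> q" using T I_def by (simp add: mor_simps)
  also have "\<dots> = (I \<oplus> nI) \<cdot> q" using T by (simp add: mor_simps)
  also have "\<dots> = z (cd K f) E" using nI(2) T by (simp add: mor_simps)
  finally have tq: "t \<cdot> q = z (cd K f) E" using uq T t_def by (simp add: mor_simps)
  have "pull K t A d = eadd K E A (pull K I A d) (pull K nI A d)"
    unfolding t_def using pull_madd u nI D ud pull_id I_def by simp
  also have "\<dots> = pull K (I \<oplus> nI) A d" using pull_madd I nI D by metis
  also have "\<dots> = ezero K E A" using nI(2) pull_zero_mor D by simp
  finally have td: "pull K t A d = ezero K E A" .
  have "I \<oplus> t = (u \<oplus> nI) \<oplus> I" using T t_def add_comm_Mor by metis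
  also have "\<dots> = u \<oplus> (nI \<oplus> I)" using T by (simp add: add_assoc_Mor mor_simps)
  also have "nI \<oplus> I = z E E" using nI(2) T add_comm_Mor by metis
  finally have u_eq: "u = I \<oplus> t" using T by (simp add: mor_simps)
  have "I \<oplus> mneg E E t \<in> H E E" using add_hom I mneg[OF t] by blast
  then show ?thesis
    using square_zero_unipotent_inverse[OF t rlz_endo_square_zero[OF r t tq td]] u_eq I_def by blast
qed

lemma cone_unique:
  assumes r1: "rlz K E1 A d1 f q1" and r2: "rlz K E2 A d2 f q2"
  shows "\<exists>c\<in>H E1 E2. iso K c"
proof -
  note D1 = rlzD[OF r1] and D2 = rlzD[OF r2]
  have ia: "idm K A \<in> H A A" using id_hom D1 by blast
  have ib: "idm K (cd K f) \<in> H (cd K f) (cd K f)" using id_hom D1 by blast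
  have fe: "f \<cdot> idm K A = idm K (cd K f) \<cdot> f" using id_left id_right D1(4) by metis
  obtain c where c: "c \<in> H E1 E2" "c \<cdot> q1 = q2 \<cdot> idm K (cd K f)"
      "push K (idm K A) E1 d1 = pull K c A d2"
    using ET3_rule[OF r1 r2 ia ib fe] by blast
  obtain c' where c': "c' \<in> H E2 E1" "c' \<cdot> q2 = q1 \<cdot> idm K (cd K f)"
      "push K (idm K A) E2 d2 = pull K c' A d1"
    using ET3_rule[OF r2 r1 ia ib fe] by blast
  have cq: "c \<cdot> q1 = q2" "c' \<cdot> q2 = q1" using c(2) c'(2) id_right D1(5) D2(5) by metis+
  have cd: "pull K c A d2 = d1" "pull K c' A d1 = d2" using c(3) c'(3) push_id D1 D2 by metis+
  note T = HomD[OF c(1)] HomD[OF c'(1)] HomD[OF D1(5)] HomD[OF D2(5)]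
  obtain v1 where v1: "v1 \<in> H E1 E1" "v1 \<cdot> (c' \<cdot> c) = idm K E1"
  proof -
    have "(c' \<cdot> c) \<cdot> q1 = q1" using T cq by (simp add: mor_simps)
    moreover have "pull K (c' \<cdot> c) A d1 = d1" using pull_cmp[OF c(1) c'(1) D1(2)] D1(3) cd by simp
    ultimately show ?thesis using rlz_endo_invertible[OF r1 cmp_hom[OF c(1) c'(1)]] that by blast
  qed
  obtain v2 where v2: "v2 \<in> H E2 E2" "(c \<cdot> c') \<cdot> v2 = idm K E2"
  proof -
    have "(c \<cdot> c') \<cdot> q2 = q2" using T cq by (simp add: mor_simps)
    moreover have "pull K (c \<cdot> c') A d2 = d2" using pull_cmp[OF c'(1) c(1) D1(2)] D2(3) cd by simp
    ultimately show ?thesis using rlz_endo_invertible[OF r2 cmp_hom[OF c'(1) c(1)]] that by blast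
  qed
  note T2 = HomD[OF v1(1)] HomD[OF v2(1)]
  have Lc: "(v1 \<cdot> c') \<cdot> c = idm K E1" using v1 T T2 by (simp add: mor_simps)
  have cR: "c \<cdot> (c' \<cdot> v2) = idm K E2" using v2 T T2 by (simp add: mor_simps)
  have "v1 \<cdot> c' = ((v1 \<cdot> c') \<cdot> c) \<cdot> (c' \<cdot> v2)" using cR T T2 by (simp add: mor_simps)
  then have "v1 \<cdot> c' = c' \<cdot> v2" using Lc T T2 by (simp add: mor_simps)
  then have "c \<cdot> (v1 \<cdot> c') = idm K E2" using cR by simp
  then show ?thesis using isoI[OF c(1) cmp_hom[OF c'(1) v1(1)] Lc] c(1) by blast
qed

lemma cone_of_pair_extension:
  assumes x: "x \<in> H A B" and r: "rlz K K' A e a a'" and bM: "biprod K (cd K a) B M i1 i2 p1 p2"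
  shows "\<exists>E d'' h' d e1 e2. rlz K E A d'' (i1 \<cdot> a \<oplus> i2 \<cdot> x) h' \<and> rlz K K' B d e1 e2 \<and> cd K e1 = E"
proof -
  note D = rlzD[OF r]
  have B: "B \<in> Ob K" using x Hom_ob by blast
  obtain N j1 j2 q1 q2 where bN: "biprod K A B N j1 j2 q1 q2" using biprod_exists D(2) B by blast
  note PN = biprodD[OF bN] and PM = biprodD[OF bM]
  note T = HomD[OF PN(2)] HomD[OF PN(3)] HomD[OF PN(4)] HomD[OF PN(5)]
    HomD[OF PM(2)] HomD[OF PM(3)] HomD[OF PM(4)] HomD[OF PM(5)] HomD[OF x] HomD[OF D(4)]
    HomD[OF D(5)] PN(1) PM(1) D(1,2,6) B
  obtain q where t1: "rlz K B A (ezero K B A) (j1 \<oplus> j2 \<cdot> x) q"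
    using split_rlz_graph[OF bN x] by blast
  define psi where "psi = i1 \<cdot> (a \<cdot> q1) \<oplus> i2 \<cdot> (idm K B \<cdot> q2)"
  note t2 = rlz_biprod[OF bN bM biprod_zobj_right[OF D(1)] r rlz_to_zobj[OF B] refl cd_id[OF B],
    folded psi_def]
  have cd: "cd K (j1 \<oplus> j2 \<cdot> x) = N" "cd K psi = M"
    unfolding psi_def using T by (simp_all add: mor_simps)
  obtain E h h' e1 e2 d'' where E: "h = psi \<cdot> (j1 \<oplus> j2 \<cdot> x)" "rlz K E A d'' h h'"
      "rlz K K' B (push K q K' (eadd K K' N (push K j1 K' (pull K (idm K K') A e))
        (push K j2 K' (pull K (z K' zobj) B (ezero K zobj B))))) e1 e2" "e1 \<in> H B E"
    using ET4_rule[OF t1 t2 cd] by blast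
  have "h = i1 \<cdot> a \<oplus> i2 \<cdot> x"
    unfolding E(1) psi_def using T PN(6-9) cmp_assoc_eq[OF PN(6)] cmp_assoc_eq[OF PN(7)]
      cmp_assoc_eq[OF PN(8)] cmp_assoc_eq[OF PN(9)] by (simp add: mor_simps)
  then show ?thesis using E(2-4) HomD by blast
qed

lemma cone_of_pair_split:
  assumes r: "rlz K C A d x y" and g: "g \<in> H (cd K x) W" and bM: "biprod K W (cd K x) M i1 i2 p1 p2"
  shows "\<exists>E d'' h' S s1 s2 r1 r2 b. rlz K E A d'' (i1 \<cdot> (g \<cdot> x) \<oplus> i2 \<cdot> x) h' \<and>
    biprod K C W S s1 s2 r1 r2 \<and> b \<in> H E S \<and> iso K b"
proof -
  note D = rlzD[OF r] and PM = biprodD[OF bM]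
  have W: "W \<in> Ob K" using g Hom_ob by blast
  note T = HomD[OF PM(2)] HomD[OF PM(3)] HomD[OF PM(4)] HomD[OF PM(5)] HomD[OF g]
    HomD[OF D(4)] HomD[OF D(5)] PM(1) D(1,2,6) W
  obtain q where t: "rlz K W (cd K x) (ezero K W (cd K x)) (i2 \<oplus> i1 \<cdot> g) q"
    using split_rlz_graph[OF biprod_swap[OF bM] g] by blast
  have cd: "cd K (i2 \<oplus> i1 \<cdot> g) = M" using T by (simp add: mor_simps)
  obtain E h h' e1 e2 d'' where E: "h = (i2 \<oplus> i1 \<cdot> g) \<cdot> x" "rlz K E A d'' h h'"
      "rlz K W C (push K y W (ezero K W (cd K x))) e1 e2" "e1 \<in> H C E"
    using ET4_rule[OF r t refl cd] by blast
  have "push K y W (ezero K W (cd K x)) = ezero K W C" using push_ezero D(5) W by blast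
  then have "rlz K W C (ezero K W C) e1 e2" using E(3) by simp
  then obtain S s1 s2 r1 r2 b where S: "biprod K C W S s1 s2 r1 r2" "b \<in> H E S" "iso K b"
    using split_rlz_iso_biprod E(4) HomD by metis
  have "h = i2 \<cdot> x \<oplus> i1 \<cdot> (g \<cdot> x)" using E(1) T by (simp add: mor_simps)
  also have "\<dots> = i1 \<cdot> (g \<cdot> x) \<oplus> i2 \<cdot> x" using T add_comm_Mor by (simp add: mor_simps)
  finally show ?thesis using E(2) S by blast
qed

end

section \<open>Resolution dimension and projective dimension\<close>

lemma subset_hat: "Z \<subseteq> hat K Z"
proof
  fix V assume "V \<in> Z"
  then have "in_hat K Z 0 V" unfolding in_hat_def by (intro exI[of _ "\<lambda>_. V"]) auto
  then show "V \<in> hat K Z" unfolding hat_def by blast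
qed

lemma resdim_eq_enat:
  assumes "in_hat K Z n C" and "\<And>m. in_hat K Z m C \<Longrightarrow> n \<le> m"
  shows "resdim K Z C = enat n"
  unfolding resdim_def using assms by (auto intro: Least_equality)

lemma pd_eq_enat:
  assumes "\<forall>V\<in>Z. \<forall>i>n. ext_vanish K i C V" and "\<And>m. \<forall>V\<in>Z. \<forall>i>m. ext_vanish K i C V \<Longrightarrow> n \<le> m"
  shows "pd K Z C = enat n"
  unfolding pd_def using assms by (auto intro: Least_equality)

context extriangulated_category
begin

lemma in_hat_ob: "Z \<subseteq> Ob K \<Longrightarrow> in_hat K Z n C \<Longrightarrow> C \<in> Ob K"
  unfolding in_hat_def by (cases n) (auto dest: rlzD(1))

lemma in_hat_Suc:
  assumes "in_hat K Z (Suc n) C"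
  shows "\<exists>C1 d x y. rlz K C C1 d x y \<and> cd K x \<in> Z \<and> in_hat K Z n C1"
proof -
  obtain Ks where Ks: "Ks 0 = C" "Ks (Suc n) \<in> Z"
      "\<forall>i<Suc n. \<exists>d x y. rlz K (Ks i) (Ks (Suc i)) d x y \<and> cd K x \<in> Z"
    using assms unfolding in_hat_def by blast
  obtain d x y where "rlz K (Ks 0) (Ks 1) d x y" "cd K x \<in> Z" using Ks(3) by auto
  moreover have "in_hat K Z n (Ks 1)" unfolding in_hat_def
    by (rule exI[of _ "\<lambda>j. Ks (Suc j)"]) (use Ks in auto)
  ultimately show ?thesis using Ks(1) by blast
qed

end

locale injective_cogenerator = extriangulated_enough +
  fixes X W
  assumes subcat_X: "subcat K X" and ext_closed_X: "extension_closed K X"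
    and cogenerator: "inj_cogenerator K X W"
begin

lemma X_ob: "X \<subseteq> Ob K"
  using subcat_X unfolding subcat_def by blast

lemma W_ob: "W \<subseteq> Ob K"
  using cogenerator X_ob unfolding inj_cogenerator_def by blast

lemma Ex_trivial_cosyzygy_W: "A \<in> X \<Longrightarrow> V \<in> W \<Longrightarrow> Ex_trivial K A (cosyzygy K V k)"
  using cogenerator ext_vanish_iff_cosyzygy[of A V "Suc k"] X_ob W_ob
  unfolding inj_cogenerator_def by auto

text \<open>Let A -> W0 -> K' be the cogenerator triangle of A. As E(C, W0) = 0, the map
  a : A -> W0 factors as g x. The cone of (a, x) : A -> W0 (+) B is an extension of K'
  by B, hence in X, and it is also the cone of the composite (g, 1) x, which is
  isomorphic to C (+) W0.\<close>

lemma cone_in_X: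
  assumes r: "rlz K C A d x y" and A: "A \<in> X" and B: "cd K x \<in> X"
    and CW: "\<forall>V\<in>W. Ex_trivial K C V"
  shows "C \<in> X"
proof -
  note D = rlzD[OF r]
  obtain K' e a a' where cog: "rlz K K' A e a a'" "cd K a \<in> W" "K' \<in> X"
    using cogenerator A unfolding inj_cogenerator_def by blast
  have W0: "cd K a \<in> Ob K" using rlzD(6)[OF cog(1)] .
  have "push K a C d = ezero K C (cd K a)"
    using CW cog(2) push_in rlzD(4)[OF cog(1)] D(1,3) unfolding Ex_trivial_def by blast
  then obtain g where g: "g \<in> H (cd K x) (cd K a)" "g \<cdot> x = a"
    using push_zero_imp_factors_through_inflation[OF r rlzD(4)[OF cog(1)]] by blast
  obtain M i1 i2 p1 p2 where bM: "biprod K (cd K a) (cd K x) M i1 i2 p1 p2"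
    using biprod_exists W0 D(6) by blast
  obtain E1 d'' h' d' e1 e2 where E1: "rlz K E1 A d'' (i1 \<cdot> a \<oplus> i2 \<cdot> x) h'"
      "rlz K K' (cd K x) d' e1 e2" "cd K e1 = E1"
    using cone_of_pair_extension[OF D(4) cog(1) bM] by blast
  have "E1 \<in> X" using ext_closed_X E1(2,3) B cog(3) unfolding extension_closed_def by blast
  obtain E2 d2 h2 S s1 s2 r1 r2 b where E2: "rlz K E2 A d2 (i1 \<cdot> a \<oplus> i2 \<cdot> x) h2"
      "biprod K C (cd K a) S s1 s2 r1 r2" "b \<in> H E2 S" "iso K b"
    using cone_of_pair_split[OF r g(1) bM] g(2) by blast
  obtain c where "c \<in> H E1 E2" "iso K c" using cone_unique[OF E1(1) E2(1)] by blast
  then have "E2 \<in> X" using subcat_X \<open>E1 \<in> X\<close> HomD unfolding subcat_def by metis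
  then have "S \<in> X" using subcat_X E2(3,4) HomD unfolding subcat_def by metis
  then show ?thesis using subcat_X E2(2) D(1) W0 unfolding subcat_def by blast
qed

lemma Ex_trivial_cosyzygy_of_in_hat:
  "in_hat K X n C \<Longrightarrow> V \<in> W \<Longrightarrow> n \<le> k \<Longrightarrow> Ex_trivial K C (cosyzygy K V k)"
proof (induction n arbitrary: C k)
  case 0
  then show ?case using Ex_trivial_cosyzygy_W unfolding in_hat_def by auto
next
  case (Suc n)
  obtain C1 d x y where t: "rlz K C C1 d x y" "cd K x \<in> X" "in_hat K X n C1"
    using in_hat_Suc[OF Suc.prems(1)] by blast
  obtain k' where k: "k = Suc k'" "n \<le> k'" using Suc.prems(3) by (cases k) auto
  obtain d' x' y' where t': "rlz K (cosyzygy K V (Suc k')) (cosyzygy K V k') d' x' y'"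
      "injective K (cd K x')"
    using cosyzygy_step Suc.prems(2) W_ob by blast
  show ?case unfolding k(1)
    using Ex_trivial_shift_right[OF t(1) t'(1)] Ex_trivial_cosyzygy_W[OF t(2) Suc.prems(2)]
      injective_Ex_trivial[OF t'(2) rlzD(1)[OF t(1)]] Suc.IH[OF t(3) Suc.prems(2) k(2)] by blast
qed

lemma Ex_trivial_syzygy_of_in_hat:
  assumes "in_hat K X n C" "V \<in> W" "n \<le> j"
  shows "Ex_trivial K (syzygy K C j) V"
proof -
  have "C \<in> Ob K" "V \<in> Ob K" using in_hat_ob[OF X_ob assms(1)] assms(2) W_ob by blast+
  then show ?thesis
    using Ex_trivial_cosyzygy_of_in_hat[OF assms]
      Ex_trivial_syz_iff_cosyz[OF syz_chain_syzygy cosyz_chain_cosyzygy] by simp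
qed

lemma Ex_trivial_syzygy_hat:
  "in_hat K W m V \<Longrightarrow> in_hat K X n C \<Longrightarrow> n \<le> j \<Longrightarrow> Ex_trivial K (syzygy K C j) V"
proof (induction m arbitrary: V j)
  case 0
  then have "V \<in> W" unfolding in_hat_def by auto
  then show ?case using Ex_trivial_syzygy_of_in_hat 0 by blast
next
  case (Suc m)
  obtain V1 d x y where t: "rlz K V V1 d x y" "cd K x \<in> W" "in_hat K W m V1"
    using in_hat_Suc[OF Suc.prems(1)] by blast
  obtain d' p p' where t': "rlz K (syzygy K C j) (syzygy K C (Suc j)) d' p p'" "projective K (cd K p)"
    using syzygy_step in_hat_ob[OF X_ob Suc.prems(2)] by blast
  show ?case
    using Ex_trivial_shift_right[OF t'(1) t(1)] projective_Ex_trivial[OF t'(2) rlzD(1)[OF t(1)]]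
      Ex_trivial_syzygy_of_in_hat[OF Suc.prems(2) t(2) Suc.prems(3)]
      Suc.IH[OF t(3) Suc.prems(2), of "Suc j"] Suc.prems(3) by simp
qed

lemma ext_vanish_hat_of_in_hat:
  assumes "in_hat K X n C" "V \<in> hat K W" "n < i"
  shows "ext_vanish K i C V"
proof -
  obtain m where m: "in_hat K W m V" using assms(2) unfolding hat_def by blast
  then show ?thesis
    using Ex_trivial_syzygy_hat[OF m assms(1), of "i - 1"] assms(3)
      ext_vanish_iff_syzygy in_hat_ob[OF X_ob assms(1)] in_hat_ob[OF W_ob m] by simp
qed

lemma in_hat_shorten:
  assumes h: "in_hat K X (Suc s) C" and v: "\<forall>V\<in>W. \<forall>i>m. ext_vanish K i C V" and ms: "m \<le> s"
  shows "in_hat K X s C"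
proof -
  obtain Ks where Ks: "Ks 0 = C" "Ks (Suc s) \<in> X"
      "\<forall>i<Suc s. \<exists>d x y. rlz K (Ks i) (Ks (Suc i)) d x y \<and> cd K x \<in> X"
    using h unfolding in_hat_def by blast
  have C: "C \<in> Ob K" using in_hat_ob[OF X_ob h] .
  have shift: "Ex_trivial K (Ks j) (cosyzygy K V (s - j))" if "j \<le> s" "V \<in> W" for j V
    using that
  proof (induction j)
    case 0
    then show ?case using v ms ext_vanish_iff_cosyzygy[OF C, of V "Suc s"] Ks(1) W_ob by auto
  next
    case (Suc j)
    have "j < Suc s" using Suc.prems(1) by simp
    then obtain d x y where t: "rlz K (Ks j) (Ks (Suc j)) d x y" "cd K x \<in> X" using Ks(3) by blast
    obtain d' x' y' where t': "rlz K (cosyzygy K V (s - j)) (cosyzygy K V (s - Suc j)) d' x' y'"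
        "injective K (cd K x')"
      using cosyzygy_step[of V "s - Suc j"] Suc.prems W_ob Suc_diff_Suc by fastforce
    show ?case
      using Ex_trivial_shift_left[OF t(1) t'(1)] injective_Ex_trivial[OF t'(2) rlzD(2)[OF t(1)]]
        Ex_trivial_cosyzygy_W[OF t(2) Suc.prems(2)] Suc by simp
  qed
  obtain d x y where "rlz K (Ks s) (Ks (Suc s)) d x y" "cd K x \<in> X" using Ks(3) by auto
  then have "Ks s \<in> X" using cone_in_X Ks(2) shift[of s] by simp
  then show ?thesis unfolding in_hat_def using Ks by (intro exI[of _ Ks]) auto
qed

lemma in_hat_min_vanishing_bound:
  "in_hat K X n C \<Longrightarrow> \<forall>V\<in>W. \<forall>i>m. ext_vanish K i C V \<Longrightarrow> in_hat K X (min n m) C"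
proof (induction n)
  case (Suc s)
  show ?case
  proof (cases "Suc s \<le> m")
    case False
    then have "in_hat K X s C" using in_hat_shorten Suc.prems by simp
    then show ?thesis using Suc.IH Suc.prems(2) False by (cases "s = m") (simp_all add: min_def)
  qed (use Suc.prems in simp)
qed simp

end

theorem proposition3p12:
  fixes K :: "('o,'m,'e) ecat" and X W :: "'o set" and C :: 'o
  assumes "extriangulated K"
    and "enough_projectives K" and "enough_injectives K"
    and "subcat K X" and "subcat K W"
    and "extension_closed K X"
    and "inj_cogenerator K X W"
    and "C \<in> hat K X"
  shows "pd K (hat K W) C = pd K W C \<and> pd K W C = resdim K X C"
proof -
  interpret injective_cogenerator K X W
    using assms unfolding injective_cogenerator_def injective_cogenerator_axioms_def
      extriangulated_enough_def extriangulated_enough_axioms_def extriangulated_category_def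
    by blast
  define n where "n = (LEAST n. in_hat K X n C)"
  have n: "in_hat K X n C" using assms(8) LeastI_ex unfolding n_def hat_def by fast
  have least: "n \<le> m" if "in_hat K X m C" for m unfolding n_def using that by (rule Least_le)
  have bound: "n \<le> m" if "\<forall>V\<in>W. \<forall>i>m. ext_vanish K i C V" for m
    using least[OF in_hat_min_vanishing_bound[OF n that]] by simp
  have vanish: "\<forall>V\<in>hat K W. \<forall>i>n. ext_vanish K i C V"
    using ext_vanish_hat_of_in_hat[OF n] by blast
  have "pd K (hat K W) C = enat n"
    using vanish bound subset_hat[of W K] by (intro pd_eq_enat) blast+
  moreover have "pd K W C = enat n"
    using vanish bound subset_hat[of W K] by (intro pd_eq_enat) blast+
  moreover have "resdim K X C = enat n" using resdim_eq_enat[OF n least] .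
  ultimately show ?thesis by simp
qed

end
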